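(* Assume $\alpha>0$, $\beta>0$, $\mu_N>0$ and $N\ge2$ fixed. The continuous-time Markov chain $y(t)$ on $\Gamma$ is ergodic: it has a unique stationary distribution $\pi$ on $\Gamma$, and there exist constants $C_1,C_2>0$ such that for all $t\ge0$ and every initial distribution of $y(0)$, $$\sum_{y\in\Gamma}|\mathbf P(y(t)=y)-\pi(y)|\le C_1e^{-C_2t}.$$
   Context: Particle system: $x(t)=(x_1(t),\dots,x_N(t))$ is the continuous-time Markov chain on $\mathbf Z^N$ in which each particle independently jumps $+1$ at rate $\alpha$ and $-1$ at rate $\beta$, and for each ordered pair $(i,j)$, $j\ne i$, at rate $\mu_N/N$ particle $i$ is moved to position $x_j$ if $x_i>x_j$ (generator $G_Ng(x)=\sum_i[\alpha(g(x+e_i)-g(x))+\beta(g(x-e_i)-g(x))]+\sum_i\sum_{j\ne i}(g(x-(x_i-x_j)e_i)-g(x))\mathbf 1\{x_i>x_j\}\mu_N/N$). Relative coordinates: $y_i(t)=x_i(t)-\min_j x_j(t)$, $y(t)=(y_1(t),\dots,y_N(t))$, which is a Markov chain on $\Gamma=\bigcup_k\Gamma_k\subset\mathbf Z_+^N$, $\Gamma_k=\{z\in\mathbf Z_+^N: z_k=0\}$. *)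

theory Defs
  imports "HOL-Analysis.Analysis"
begin

text \<open>Configurations of the particle system are lists of integers of length N
 (entry i is the position of particle i).\<close>

definition rel :: "int list \<Rightarrow> int list" where
  "rel x = map (\<lambda>a. a - Min (set x)) x"

definition Gamma :: "nat \<Rightarrow> int list set" where
  "Gamma N = {z. length z = N \<and> (\<forall>a\<in>set z. 0 \<le> a) \<and> 0 \<in> set z}"

text \<open>The elementary transitions (rate, target) of the x-chain from configuration x,
 exactly as in the generator G_N: particle i jumps +1 at rate alpha, -1 at rate beta,
 and for j \<noteq> i it is moved to x_j at rate mu/N if x_i > x_j
 (x - (x_i - x_j) e_i = x[i := x_j]).\<close>
definition trans :: "nat \<Rightarrow> real \<Rightarrow> real \<Rightarrow> real \<Rightarrow> int list \<Rightarrow> (real \<times> int list) list" where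
  "trans N \<alpha> \<beta> \<mu> x =
     concat (map (\<lambda>i. [(\<alpha>, x[i := x ! i + 1]), (\<beta>, x[i := x ! i - 1])] @
        map (\<lambda>j. (\<mu> / real N, x[i := x ! j]))
            (filter (\<lambda>j. j \<noteq> i \<and> x ! i > x ! j) [0..<N])) [0..<N])"

text \<open>Generator (Q-matrix) of the relative-coordinate chain y(t) on Gamma, obtained
 from G_N: Q(y,y') = sum over transitions x \<rightarrow> x' of rate * (1[rel x' = y'] - 1[y' = y]).\<close>
definition Qy :: "nat \<Rightarrow> real \<Rightarrow> real \<Rightarrow> real \<Rightarrow> int list \<Rightarrow> int list \<Rightarrow> real" where
  "Qy N \<alpha> \<beta> \<mu> y y' =
     (\<Sum>(r, x')\<leftarrow>trans N \<alpha> \<beta> \<mu> y.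
        r * ((if rel x' = y' then 1 else 0) - (if y' = y then 1 else 0)))"

fun Qpow :: "nat \<Rightarrow> real \<Rightarrow> real \<Rightarrow> real \<Rightarrow> nat \<Rightarrow> int list \<Rightarrow> int list \<Rightarrow> real" where
  "Qpow N \<alpha> \<beta> \<mu> 0 y y' = (if y = y' then 1 else 0)"
| "Qpow N \<alpha> \<beta> \<mu> (Suc n) y y' =
     (\<Sum>\<^sub>\<infinity>z\<in>Gamma N. Qpow N \<alpha> \<beta> \<mu> n y z * Qy N \<alpha> \<beta> \<mu> z y')"

text \<open>Transition function P_t = exp(t Q) (Q is bounded: total exit rates are bounded).\<close>
definition Pt :: "nat \<Rightarrow> real \<Rightarrow> real \<Rightarrow> real \<Rightarrow> real \<Rightarrow> int list \<Rightarrow> int list \<Rightarrow> real" where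
  "Pt N \<alpha> \<beta> \<mu> t y y' = (\<Sum>n. t ^ n / fact n * Qpow N \<alpha> \<beta> \<mu> n y y')"

text \<open>Probability distributions on Gamma (as weight functions; values outside Gamma irrelevant).\<close>
definition is_distr :: "nat \<Rightarrow> (int list \<Rightarrow> real) \<Rightarrow> bool" where
  "is_distr N p \<longleftrightarrow> (\<forall>y\<in>Gamma N. 0 \<le> p y) \<and> (p has_sum 1) (Gamma N)"

text \<open>Law of y(t), i.e. P(y(t) = y'), when y(0) has distribution p.\<close>
definition law :: "nat \<Rightarrow> real \<Rightarrow> real \<Rightarrow> real \<Rightarrow> real \<Rightarrow> (int list \<Rightarrow> real) \<Rightarrow> int list \<Rightarrow> real" where
  "law N \<alpha> \<beta> \<mu> t p y' = (\<Sum>\<^sub>\<infinity>y\<in>Gamma N. p y * Pt N \<alpha> \<beta> \<mu> t y y')"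

definition stationary :: "nat \<Rightarrow> real \<Rightarrow> real \<Rightarrow> real \<Rightarrow> (int list \<Rightarrow> real) \<Rightarrow> bool" where
  "stationary N \<alpha> \<beta> \<mu> \<pi> \<longleftrightarrow> is_distr N \<pi> \<and>
     (\<forall>t\<ge>0. \<forall>y\<in>Gamma N. law N \<alpha> \<beta> \<mu> t \<pi> y = \<pi> y)"

end

theory Submission
  imports Defs
begin

(*
  Let Lambda exceed every total jump rate of the relative-coordinate chain. Then
  K = I + Q / Lambda is a stochastic matrix on Gamma, and expanding (Lambda (K - I))^n binomially
  shows that the transition function P_t = exp (t Q) is the Poisson mixture
  sum_k exp (- Lambda t) (Lambda t)^k / k! K^k (uniformization).

  K satisfies Doeblin's condition K^N (y, 0) >= c^N, where 0 is the all-zero configuration: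
  moving the particles one at a time onto a particle at the minimum leads from any y to 0 in
  N steps, and a step in which nothing has to move uses the holding probability 1 / Lambda.
  Consequently K^N contracts signed measures of total mass 0 by the factor 1 - c^N in l^1, so
  the rows K^n (0, -) converge to a K-invariant distribution pi, and
  || p K^n - pi ||_1 <= 2 (1 - c^N)^(n div N) for every distribution p. Averaging this over the
  Poisson number of jumps gives exponential convergence of p P_t to pi and invariance of pi under
  every P_t; a stationary sigma satisfies sigma = sigma P_t --> pi, hence sigma = pi.
*)

section \<open>Infinite sums and limits\<close>

lemma has_sum_diff:
  fixes f g :: "'a \<Rightarrow> 'b::topological_ab_group_add"
  assumes "(f has_sum a) A" and "(g has_sum b) A"
  shows "((\<lambda>x. f x - g x) has_sum (a - b)) A"
  using has_sum_add[OF assms(1), of "\<lambda>x. - g x" "- b"] assms(2) by (simp add: has_sum_uminus)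

lemma summable_on_diff:
  fixes f g :: "'a \<Rightarrow> 'b::topological_ab_group_add"
  assumes "f summable_on A" and "g summable_on A"
  shows "(\<lambda>x. f x - g x) summable_on A"
  using assms has_sum_diff unfolding summable_on_def by blast

lemma infsum_diff:
  fixes f g :: "'a \<Rightarrow> 'b::{topological_ab_group_add, t2_space}"
  assumes "f summable_on A" and "g summable_on A"
  shows "(\<Sum>\<^sub>\<infinity>x\<in>A. f x - g x) = infsum f A - infsum g A"
  using has_sum_diff[OF has_sum_infsum[OF assms(1)] has_sum_infsum[OF assms(2)]] by (rule infsumI)

lemma has_sum_sum:
  fixes f :: "'i \<Rightarrow> 'a \<Rightarrow> 'b::topological_comm_monoid_add"
  assumes "finite I" and "\<And>i. i \<in> I \<Longrightarrow> (f i has_sum s i) A"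
  shows "((\<lambda>x. \<Sum>i\<in>I. f i x) has_sum (\<Sum>i\<in>I. s i)) A"
  using assms by (induction I rule: finite_induct) (auto intro: has_sum_add)

lemma has_sum_sum_list:
  fixes f :: "'e \<Rightarrow> 'a \<Rightarrow> 'b::topological_comm_monoid_add"
  assumes "\<And>e. e \<in> set xs \<Longrightarrow> (f e has_sum s e) A"
  shows "((\<lambda>y. \<Sum>e\<leftarrow>xs. f e y) has_sum (\<Sum>e\<leftarrow>xs. s e)) A"
  using assms
proof (induction xs)
  case (Cons e xs)
  have "(f e has_sum s e) A" and "((\<lambda>y. \<Sum>e\<leftarrow>xs. f e y) has_sum (\<Sum>e\<leftarrow>xs. s e)) A"
    using Cons by simp_all
  from has_sum_add[OF this] show ?case by simp
qed simp

lemma has_sum_indicator_point: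
  assumes "a \<in> A"
  shows "((\<lambda>x. if x = a then c else 0) has_sum c) A"
  using assms by (intro has_sum_finite_neutralI[where B = "{a}"]) auto

lemma abs_summable_on_real_iff:
  fixes f :: "'a \<Rightarrow> real"
  shows "(\<lambda>x. \<bar>f x\<bar>) summable_on A \<longleftrightarrow> f summable_on A"
  using summable_on_iff_abs_summable_on_real[of f A] by simp

lemma abs_le_infsum_abs:
  fixes f :: "'a \<Rightarrow> real"
  assumes "f summable_on S" and "y \<in> S"
  shows "\<bar>f y\<bar> \<le> (\<Sum>\<^sub>\<infinity>x\<in>S. \<bar>f x\<bar>)"
proof -
  have "sum (\<lambda>x. \<bar>f x\<bar>) {y} \<le> (\<Sum>\<^sub>\<infinity>x\<in>S. \<bar>f x\<bar>)"
    using assms by (intro finite_sum_le_infsum) (auto simp: abs_summable_on_real_iff)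
  then show ?thesis by simp
qed

lemma infsum_abs_le_of_tendsto:
  fixes f :: "nat \<Rightarrow> 'a \<Rightarrow> real"
  assumes lim: "\<And>y. y \<in> S \<Longrightarrow> (\<lambda>k. f k y) \<longlonglongrightarrow> g y"
    and summable: "\<And>k. f k summable_on S" and bound: "\<And>k. (\<Sum>\<^sub>\<infinity>y\<in>S. \<bar>f k y\<bar>) \<le> B"
  shows "(\<lambda>y. \<bar>g y\<bar>) summable_on S" and "(\<Sum>\<^sub>\<infinity>y\<in>S. \<bar>g y\<bar>) \<le> B"
proof -
  have finite_sums: "(\<Sum>y\<in>F. \<bar>g y\<bar>) \<le> B" if "finite F" and "F \<subseteq> S" for F
  proof (rule LIMSEQ_le_const2)
    show "(\<lambda>k. \<Sum>y\<in>F. \<bar>f k y\<bar>) \<longlonglongrightarrow> (\<Sum>y\<in>F. \<bar>g y\<bar>)"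
      using that lim by (intro tendsto_sum tendsto_rabs) auto
    have "(\<Sum>y\<in>F. \<bar>f k y\<bar>) \<le> (\<Sum>\<^sub>\<infinity>y\<in>S. \<bar>f k y\<bar>)" for k
      using that summable[of k] by (intro finite_sum_le_infsum) (auto simp: abs_summable_on_real_iff)
    then have "(\<Sum>y\<in>F. \<bar>f k y\<bar>) \<le> B" for k
      using bound[of k] by (rule order.trans)
    then show "\<exists>N. \<forall>k\<ge>N. (\<Sum>y\<in>F. \<bar>f k y\<bar>) \<le> B" by blast
  qed
  show summable_g: "(\<lambda>y. \<bar>g y\<bar>) summable_on S"
  proof (rule nonneg_bdd_above_summable_on)
    show "bdd_above (sum (\<lambda>y. \<bar>g y\<bar>) ` {F. F \<subseteq> S \<and> finite F})"
      by (rule bdd_aboveI2[where M = B]) (use finite_sums in blast)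
  qed simp
  show "(\<Sum>\<^sub>\<infinity>y\<in>S. \<bar>g y\<bar>) \<le> B"
    by (rule infsum_le_finite_sums[OF summable_g finite_sums])
qed

lemma has_sum_swap_nonneg:
  fixes f :: "'a \<times> 'b \<Rightarrow> real"
  assumes nonneg: "\<And>x y. x \<in> A \<Longrightarrow> y \<in> B \<Longrightarrow> 0 \<le> f (x, y)"
    and rows: "\<And>x. x \<in> A \<Longrightarrow> ((\<lambda>y. f (x, y)) has_sum r x) B" and r: "(r has_sum s) A"
  shows "\<And>y. y \<in> B \<Longrightarrow> (\<lambda>x. f (x, y)) summable_on A"
    and "((\<lambda>y. \<Sum>\<^sub>\<infinity>x\<in>A. f (x, y)) has_sum s) B"
proof -
  have r_summable: "r summable_on A"
    using r by (auto simp: summable_on_def)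
  show columns: "(\<lambda>x. f (x, y)) summable_on A" if y: "y \<in> B" for y
  proof (rule summable_on_comparison_test[OF r_summable])
    show "f (x, y) \<le> r x" if "x \<in> A" for x
      using finite_sum_le_has_sum[OF rows[OF that], of "{y}"] nonneg that y by simp
    show "0 \<le> f (x, y)" if "x \<in> A" for x
      using nonneg that y by simp
  qed
  from r_summable have f_summable: "f summable_on A \<times> B"
    using summable_on_SigmaI[where g = r and A = A and B = "\<lambda>_. B", OF rows] by (simp add: nonneg)
  have "(f has_sum s) (A \<times> B)"
    by (rule has_sum_SigmaI[OF rows r f_summable])
  then have swapped: "((\<lambda>(y, x). f (x, y)) has_sum s) (B \<times> A)"
    by (subst (asm) has_sum_swap)
  have "((\<lambda>x. (\<lambda>(y, x). f (x, y)) (y, x)) has_sum (\<Sum>\<^sub>\<infinity>x\<in>A. f (x, y))) A" if "y \<in> B" for y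
    using has_sum_infsum[OF columns[OF that]] by simp
  then show "((\<lambda>y. \<Sum>\<^sub>\<infinity>x\<in>A. f (x, y)) has_sum s) B"
    by (rule has_sum_Sigma'[OF swapped])
qed

lemma infsum_abs_mixture_le:
  fixes w :: "nat \<Rightarrow> real" and u :: "nat \<Rightarrow> 'a \<Rightarrow> real"
  assumes w: "\<And>k. 0 \<le> w k" and u: "\<And>k. u k summable_on S"
    and g: "\<And>y. y \<in> S \<Longrightarrow> ((\<lambda>k. w k * u k y) has_sum g y) UNIV"
    and B: "((\<lambda>k. w k * B k) has_sum b) UNIV" and bound: "\<And>k. (\<Sum>\<^sub>\<infinity>y\<in>S. \<bar>u k y\<bar>) \<le> B k"
  shows "(\<lambda>y. \<bar>g y\<bar>) summable_on S" and "(\<Sum>\<^sub>\<infinity>y\<in>S. \<bar>g y\<bar>) \<le> b"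
proof -
  define h where "h = (\<lambda>(k, y). w k * \<bar>u k y\<bar>)"
  let ?norm = "\<lambda>k. \<Sum>\<^sub>\<infinity>y\<in>S. \<bar>u k y\<bar>"
  have rows: "((\<lambda>y. h (k, y)) has_sum w k * ?norm k) S" for k
  proof -
    have "(\<lambda>y. \<bar>u k y\<bar>) summable_on S"
      using u by (simp add: abs_summable_on_real_iff)
    from has_sum_cmult_right[OF has_sum_infsum[OF this], of "w k"] show ?thesis
      by (simp add: h_def)
  qed
  have norms: "(\<lambda>k. w k * ?norm k) summable_on UNIV"
  proof (rule summable_on_comparison_test)
    show "(\<lambda>k. w k * B k) summable_on UNIV"
      using B by (auto simp: summable_on_def)
    show "w k * ?norm k \<le> w k * B k" for k
      by (rule mult_left_mono[OF bound w])
    show "0 \<le> w k * ?norm k" for k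
      using w by (simp add: infsum_nonneg)
  qed
  note tonelli = has_sum_swap_nonneg[OF _ rows has_sum_infsum[OF norms]]
  have h_nonneg: "0 \<le> h (k, y)" for k y
    using w by (simp add: h_def)
  have pointwise: "\<bar>g y\<bar> \<le> (\<Sum>\<^sub>\<infinity>k. h (k, y))" if y: "y \<in> S" for y
    using norm_infsum_le[OF g[OF y] has_sum_infsum[OF tonelli(1)[OF h_nonneg y]]] w
    by (simp add: h_def abs_mult)
  have sums: "((\<lambda>y. \<Sum>\<^sub>\<infinity>k. h (k, y)) has_sum (\<Sum>\<^sub>\<infinity>k. w k * ?norm k)) S"
    using tonelli(2)[OF h_nonneg] by simp
  have "(\<lambda>y. \<Sum>\<^sub>\<infinity>k. h (k, y)) summable_on S"
    using sums by (auto simp: summable_on_def)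
  then show summable_g: "(\<lambda>y. \<bar>g y\<bar>) summable_on S"
    by (rule summable_on_comparison_test) (simp_all add: pointwise)
  have "(\<Sum>\<^sub>\<infinity>y\<in>S. \<bar>g y\<bar>) \<le> (\<Sum>\<^sub>\<infinity>k. w k * ?norm k)"
    using has_sum_infsum[OF summable_g] sums pointwise by (rule has_sum_mono)
  also have "\<dots> \<le> b"
    by (rule has_sum_mono[OF has_sum_infsum[OF norms] B]) (rule mult_left_mono[OF bound w])
  finally show "(\<Sum>\<^sub>\<infinity>y\<in>S. \<bar>g y\<bar>) \<le> b" .
qed

lemma eq_0_if_abs_le_null_sequence:
  fixes c :: real
  assumes "\<And>n. \<bar>c\<bar> \<le> b n" and "b \<longlonglongrightarrow> 0"
  shows "c = 0"
proof -
  have "\<bar>c\<bar> \<le> 0"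
    using assms by (intro LIMSEQ_le_const[OF assms(2)]) auto
  then show ?thesis by simp
qed

lemma Cauchy_if_tail_bound:
  fixes X :: "nat \<Rightarrow> real"
  assumes tail: "\<And>n k. \<bar>X (k + n) - X n\<bar> \<le> b n" and b: "b \<longlonglongrightarrow> 0"
  shows "Cauchy X"
proof (rule metric_CauchyI)
  fix e :: real assume "0 < e"
  then have "eventually (\<lambda>n. b n < e / 2) sequentially"
    using b by (intro order_tendstoD(2)) auto
  then obtain M where M: "b M < e / 2"
    by (auto simp: eventually_sequentially)
  have half: "\<bar>X n - X M\<bar> < e / 2" if "M \<le> n" for n
    using tail[where n = M and k = "n - M"] M that by auto
  then have "\<bar>X m - X n\<bar> < e" if "M \<le> m" "M \<le> n" for m n
    using half[OF that(1)] half[OF that(2)] unfolding abs_less_iff by linarith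
  then show "\<exists>M. \<forall>m\<ge>M. \<forall>n\<ge>M. dist (X m) (X n) < e"
    by (auto simp: dist_real_def)
qed

lemma filterlim_div_nat_at_top:
  assumes "0 < (m :: nat)"
  shows "filterlim (\<lambda>n. n div m) at_top sequentially"
  unfolding filterlim_at_top eventually_sequentially
proof
  fix Z :: nat
  have "Z \<le> n div m" if "Z * m \<le> n" for n
    using div_le_mono[OF that, of m] assms by simp
  then show "\<exists>N. \<forall>n\<ge>N. Z \<le> n div m" by blast
qed

lemma power_div_le_powr_power:
  fixes r :: real
  assumes "0 < r" and "r \<le> 1" and "0 < m"
  shows "r ^ (k div m) \<le> (r powr (1 / m)) ^ k / r"
proof -
  have "k = k div m * m + k mod m"
    by simp
  then have "k < Suc (k div m) * m"
    using mod_less_divisor[OF assms(3), of k] by (simp only: mult_Suc)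
  then have "real k * (1 / real m) \<le> real (Suc (k div m))"
    using assms(3) by (simp add: field_simps flip: of_nat_mult)
  then have "r powr real (Suc (k div m)) \<le> r powr (real k * (1 / real m))"
    using assms by (intro powr_mono') auto
  moreover have "r powr real (Suc (k div m)) = r ^ (k div m) * r"
    using powr_realpow[OF assms(1), of "Suc (k div m)"] by (simp add: mult.commute)
  moreover have "r powr (real k * (1 / real m)) = (r powr (1 / m)) ^ k"
    using assms(1) by (simp add: powr_power mult.commute)
  ultimately have "r ^ (k div m) * r \<le> (r powr (1 / m)) ^ k"
    by simp
  then show ?thesis
    using assms(1) by (simp add: field_simps)
qed

lemma sum_list_map_concat: "sum_list (map f (concat xss)) = (\<Sum>xs\<leftarrow>xss. sum_list (map f xs))"
  by (induction xss) auto

lemma binomial_convolution_Suc: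
  fixes x y :: real and a :: "nat \<Rightarrow> real"
  shows "(\<Sum>k\<le>n. real (n choose k) * x ^ k * y ^ (n - k) * (x * a (Suc k) + y * a k))
       = (\<Sum>k\<le>Suc n. real (Suc n choose k) * x ^ k * y ^ (Suc n - k) * a k)"
proof -
  define A where "A = (\<Sum>k\<le>n. real (n choose k) * x ^ Suc k * y ^ (n - k) * a (Suc k))"
  define B where "B = (\<Sum>k\<le>n. real (n choose Suc k) * x ^ Suc k * y ^ (n - k) * a (Suc k))"
  have "(\<Sum>k\<le>Suc n. real (Suc n choose k) * x ^ k * y ^ (Suc n - k) * a k)
      = y ^ Suc n * a 0 + (\<Sum>k\<le>n. real (Suc n choose Suc k) * x ^ Suc k * y ^ (n - k) * a (Suc k))"
    by (subst sum.atMost_Suc_shift) simp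
  also have "\<dots> = y ^ Suc n * a 0 + A + B"
    unfolding A_def B_def by (simp add: sum.distrib[symmetric] algebra_simps)
  finally have rhs: "(\<Sum>k\<le>Suc n. real (Suc n choose k) * x ^ k * y ^ (Suc n - k) * a k)
      = y ^ Suc n * a 0 + A + B" .
  have "(\<Sum>k\<le>n. real (n choose k) * x ^ k * y ^ (n - k) * (x * a (Suc k) + y * a k))
      = A + (\<Sum>k\<le>n. real (n choose k) * x ^ k * y ^ (Suc n - k) * a k)"
    unfolding A_def sum.distrib[symmetric]
    by (intro sum.cong refl) (simp add: Suc_diff_le algebra_simps)
  also have "(\<Sum>k\<le>n. real (n choose k) * x ^ k * y ^ (Suc n - k) * a k)
      = (\<Sum>k\<le>Suc n. real (n choose k) * x ^ k * y ^ (Suc n - k) * a k)"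
    by simp
  also have "\<dots> = y ^ Suc n * a 0 + B"
    unfolding B_def by (subst sum.atMost_Suc_shift) simp
  finally show ?thesis
    using rhs by simp
qed

lemma exp_cauchy_product_coeff:
  fixes x t :: real and c :: "nat \<Rightarrow> real"
  shows "(\<Sum>i\<le>n. (x * t) ^ i / fact i * c i * ((- (x * t)) ^ (n - i) / fact (n - i)))
       = t ^ n / fact n * (\<Sum>i\<le>n. real (n choose i) * x ^ i * (- x) ^ (n - i) * c i)"
proof -
  have "(x * t) ^ i / fact i * c i * ((- (x * t)) ^ (n - i) / fact (n - i))
      = t ^ n / fact n * (real (n choose i) * x ^ i * (- x) ^ (n - i) * c i)" if "i \<le> n" for i
  proof -
    have "(fact n :: real) = fact i * fact (n - i) * real (n choose i)"
      using binomial_fact[OF that, where 'a = real] by (simp add: field_simps)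
    moreover have "t ^ n = t ^ i * t ^ (n - i)"
      using that by (simp flip: power_add)
    moreover have "(- (x * t)) ^ (n - i) = (- x) ^ (n - i) * t ^ (n - i)"
      by (simp flip: power_mult_distrib)
    ultimately show ?thesis
      using that by (simp add: power_mult_distrib field_simps)
  qed
  then show ?thesis
    by (simp add: sum_distrib_left)
qed

lemma exp_series_sums: "(\<lambda>n. x ^ n / fact n) sums exp (x :: real)"
  using exp_converges[of x] by (simp add: divide_inverse_commute)

definition poisson_weight :: "real \<Rightarrow> nat \<Rightarrow> real" where
  "poisson_weight r k = exp (- r) * r ^ k / fact k"

lemma poisson_weight_nonneg: "0 \<le> r \<Longrightarrow> 0 \<le> poisson_weight r k"
  by (simp add: poisson_weight_def)

lemma poisson_weight_geometric_has_sum: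
  assumes "0 \<le> r" and "0 \<le> \<theta>"
  shows "((\<lambda>k. poisson_weight r k * \<theta> ^ k) has_sum exp (- r * (1 - \<theta>))) UNIV"
proof -
  have "(\<lambda>k. exp (- r) * ((r * \<theta>) ^ k / fact k)) sums (exp (- r) * exp (r * \<theta>))"
    by (intro sums_mult exp_series_sums)
  then have "(\<lambda>k. poisson_weight r k * \<theta> ^ k) sums exp (- r * (1 - \<theta>))"
    by (simp add: poisson_weight_def power_mult_distrib algebra_simps flip: exp_add)
  then show ?thesis
    using assms by (intro sums_nonneg_imp_has_sum) (auto simp: poisson_weight_def)
qed

lemma poisson_weight_has_sum: "0 \<le> r \<Longrightarrow> (poisson_weight r has_sum 1) UNIV"
  using poisson_weight_geometric_has_sum[of r 1] by simp

section \<open>Nonnegative kernels\<close>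

text \<open>Kernels are real matrices indexed by a set \<open>S\<close>; signed measures are row vectors and act
  on the left: \<open>kernel_act S M v\<close> is \<open>v M\<close>.\<close>

definition nonneg_kernel_rowsum :: "'a set \<Rightarrow> ('a \<Rightarrow> 'a \<Rightarrow> real) \<Rightarrow> real \<Rightarrow> bool" where
  "nonneg_kernel_rowsum S M c \<longleftrightarrow> (\<forall>y\<in>S. \<forall>z\<in>S. 0 \<le> M y z) \<and> (\<forall>y\<in>S. (M y has_sum c) S)"

abbreviation stochastic_kernel :: "'a set \<Rightarrow> ('a \<Rightarrow> 'a \<Rightarrow> real) \<Rightarrow> bool" where
  "stochastic_kernel S M \<equiv> nonneg_kernel_rowsum S M 1"

definition distribution_on :: "'a set \<Rightarrow> ('a \<Rightarrow> real) \<Rightarrow> bool" where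
  "distribution_on S p \<longleftrightarrow> (\<forall>y\<in>S. 0 \<le> p y) \<and> (p has_sum 1) S"

definition kernel_act :: "'a set \<Rightarrow> ('a \<Rightarrow> 'a \<Rightarrow> real) \<Rightarrow> ('a \<Rightarrow> real) \<Rightarrow> 'a \<Rightarrow> real" where
  "kernel_act S M v z = (\<Sum>\<^sub>\<infinity>y\<in>S. v y * M y z)"

definition kernel_mult :: "'a set \<Rightarrow> ('a \<Rightarrow> 'a \<Rightarrow> real) \<Rightarrow> ('a \<Rightarrow> 'a \<Rightarrow> real) \<Rightarrow> 'a \<Rightarrow> 'a \<Rightarrow> real" where
  "kernel_mult S A B y = kernel_act S B (A y)"

definition kernel_pow :: "'a set \<Rightarrow> ('a \<Rightarrow> 'a \<Rightarrow> real) \<Rightarrow> nat \<Rightarrow> 'a \<Rightarrow> 'a \<Rightarrow> real" where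
  "kernel_pow S M n = ((\<lambda>A. kernel_mult S A M) ^^ n) (\<lambda>y y'. if y = y' then 1 else 0)"

lemma kernel_pow_0: "kernel_pow S M 0 = (\<lambda>y y'. if y = y' then 1 else 0)"
  by (simp add: kernel_pow_def)

lemma kernel_pow_Suc: "kernel_pow S M (Suc n) = kernel_mult S (kernel_pow S M n) M"
  by (simp add: kernel_pow_def)

lemma kernel_act_cong:
  assumes "\<And>y. y \<in> S \<Longrightarrow> v y = v' y" and "\<And>y. y \<in> S \<Longrightarrow> M y z = M' y z"
  shows "kernel_act S M v z = kernel_act S M' v' z"
  unfolding kernel_act_def using assms by (intro infsum_cong) simp

lemma kernel_act_id:
  assumes "z \<in> S"
  shows "kernel_act S (\<lambda>y y'. if y = y' then 1 else 0) v z = v z"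
proof -
  have "((\<lambda>y. v y * (if y = z then 1 else 0)) has_sum v z) S"
    using has_sum_indicator_point[OF assms, of "v z"] by (simp add: if_distrib cong: if_cong)
  then show ?thesis by (simp add: kernel_act_def infsumI)
qed

lemma stochastic_kernel_id: "stochastic_kernel S (\<lambda>y y'. if y = y' then 1 else 0)"
  unfolding nonneg_kernel_rowsum_def
proof (intro conjI ballI)
  show "((\<lambda>y'. if y = y' then 1 else 0) has_sum 1) S" if "y \<in> S" for y
    using that by (intro has_sum_finite_neutralI[where B = "{y}"]) auto
qed auto

context
  fixes S :: "'a set" and M :: "'a \<Rightarrow> 'a \<Rightarrow> real" and c :: real
  assumes M: "nonneg_kernel_rowsum S M c"
begin

lemma kernel_nonneg: "y \<in> S \<Longrightarrow> z \<in> S \<Longrightarrow> 0 \<le> M y z"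
  using M by (simp add: nonneg_kernel_rowsum_def)

lemma kernel_row_has_sum: "y \<in> S \<Longrightarrow> (M y has_sum c) S"
  using M by (simp add: nonneg_kernel_rowsum_def)

lemma kernel_le_rowsum:
  assumes "y \<in> S" and "z \<in> S"
  shows "M y z \<le> c"
proof -
  have "sum (M y) {z} \<le> c"
    using assms kernel_row_has_sum kernel_nonneg by (intro finite_sum_le_has_sum) auto
  then show ?thesis by simp
qed

lemma kernel_act_summand_abs_le:
  assumes "y \<in> S" and "z \<in> S"
  shows "\<bar>v y * M y z\<bar> \<le> \<bar>v y\<bar> * c"
  using assms kernel_nonneg kernel_le_rowsum by (simp add: abs_mult mult_left_mono)

lemma kernel_act_summable_summand:
  assumes "v summable_on S" and "z \<in> S"
  shows "(\<lambda>y. v y * M y z) summable_on S"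
proof -
  have "(\<lambda>y. \<bar>v y\<bar> * c) summable_on S"
    using assms(1) by (simp add: summable_on_cmult_left abs_summable_on_real_iff)
  then have "(\<lambda>y. \<bar>v y * M y z\<bar>) summable_on S"
    by (rule summable_on_comparison_test) (use assms(2) kernel_act_summand_abs_le in auto)
  then show ?thesis
    by (simp add: abs_summable_on_real_iff)
qed

lemma kernel_act_abs_summable_product:
  assumes "v summable_on S"
  shows "(\<lambda>(y, z). \<bar>v y\<bar> * M y z) summable_on S \<times> S"
proof -
  have "((\<lambda>z. \<bar>v y\<bar> * M y z) has_sum \<bar>v y\<bar> * c) S" if "y \<in> S" for y
    using that kernel_row_has_sum by (intro has_sum_cmult_right)
  moreover have "(\<lambda>y. \<bar>v y\<bar> * c) summable_on S"
    using assms by (simp add: summable_on_cmult_left abs_summable_on_real_iff)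
  ultimately show ?thesis
    using kernel_nonneg by (intro summable_on_SigmaI[where g = "\<lambda>y. \<bar>v y\<bar> * c"]) auto
qed

lemma kernel_act_summable_product:
  assumes "v summable_on S"
  shows "(\<lambda>(y, z). v y * M y z) summable_on S \<times> S"
proof -
  have "(\<lambda>(y, z). \<bar>v y * M y z\<bar>) summable_on S \<times> S"
    using kernel_act_abs_summable_product[OF assms] kernel_nonneg
    by (subst summable_on_cong[where g = "\<lambda>(y, z). \<bar>v y\<bar> * M y z"]) (auto simp: abs_mult)
  then show ?thesis
    using abs_summable_on_real_iff[of "\<lambda>(y, z). v y * M y z"] by (simp add: case_prod_unfold)
qed

lemma kernel_act_summable:
  assumes "v summable_on S"
  shows "kernel_act S M v summable_on S"
proof -
  have "(\<lambda>(z, y). v y * M y z) summable_on S \<times> S"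
    using kernel_act_summable_product[OF assms] by (subst summable_on_swap) (simp add: case_prod_unfold)
  then show ?thesis
    unfolding kernel_act_def[abs_def]
    using summable_on_Sigma_banach[where f = "\<lambda>z y. v y * M y z" and A = S and B = "\<lambda>_. S"] by simp
qed

lemma kernel_act_infsum:
  assumes "v summable_on S"
  shows "infsum (kernel_act S M v) S = c * infsum v S"
proof -
  have "infsum (kernel_act S M v) S = (\<Sum>\<^sub>\<infinity>y\<in>S. \<Sum>\<^sub>\<infinity>z\<in>S. v y * M y z)"
    unfolding kernel_act_def[abs_def]
    using kernel_act_summable_product[OF assms] by (intro infsum_swap_banach[symmetric]) simp
  also have "\<dots> = (\<Sum>\<^sub>\<infinity>y\<in>S. v y * c)"
    using kernel_row_has_sum by (intro infsum_cong infsumI has_sum_cmult_right) auto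
  finally show ?thesis
    by (simp add: infsum_cmult_right' mult.commute)
qed

lemma kernel_act_nonneg:
  assumes "\<And>y. y \<in> S \<Longrightarrow> 0 \<le> v y" and "z \<in> S"
  shows "0 \<le> kernel_act S M v z"
  unfolding kernel_act_def using assms kernel_nonneg by (intro infsum_nonneg) auto

lemma kernel_act_abs_le:
  assumes "v summable_on S" and "z \<in> S"
  shows "\<bar>kernel_act S M v z\<bar> \<le> kernel_act S M (\<lambda>y. \<bar>v y\<bar>) z"
proof -
  have "(\<lambda>y. \<bar>v y * M y z\<bar>) summable_on S"
    using kernel_act_summable_summand[OF assms] by (simp add: abs_summable_on_real_iff)
  then have "\<bar>kernel_act S M v z\<bar> \<le> (\<Sum>\<^sub>\<infinity>y\<in>S. \<bar>v y * M y z\<bar>)"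
    unfolding kernel_act_def using norm_infsum_bound[of "\<lambda>y. v y * M y z" S] by simp
  also have "\<dots> = kernel_act S M (\<lambda>y. \<bar>v y\<bar>) z"
    unfolding kernel_act_def using assms(2) kernel_nonneg by (intro infsum_cong) (simp add: abs_mult)
  finally show ?thesis .
qed

lemma kernel_act_l1_le:
  assumes "v summable_on S"
  shows "(\<lambda>z. \<bar>kernel_act S M v z\<bar>) summable_on S"
    and "(\<Sum>\<^sub>\<infinity>z\<in>S. \<bar>kernel_act S M v z\<bar>) \<le> c * (\<Sum>\<^sub>\<infinity>y\<in>S. \<bar>v y\<bar>)"
proof -
  have abs_v: "(\<lambda>y. \<bar>v y\<bar>) summable_on S"
    using assms by (simp add: abs_summable_on_real_iff)
  show summable: "(\<lambda>z. \<bar>kernel_act S M v z\<bar>) summable_on S"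
    using kernel_act_summable[OF assms] by (simp add: abs_summable_on_real_iff)
  have "(\<Sum>\<^sub>\<infinity>z\<in>S. \<bar>kernel_act S M v z\<bar>) \<le> infsum (kernel_act S M (\<lambda>y. \<bar>v y\<bar>)) S"
    using summable kernel_act_summable[OF abs_v] kernel_act_abs_le[OF assms]
    by (intro infsum_mono) auto
  also have "\<dots> = c * (\<Sum>\<^sub>\<infinity>y\<in>S. \<bar>v y\<bar>)"
    by (rule kernel_act_infsum[OF abs_v])
  finally show "(\<Sum>\<^sub>\<infinity>z\<in>S. \<bar>kernel_act S M v z\<bar>) \<le> c * (\<Sum>\<^sub>\<infinity>y\<in>S. \<bar>v y\<bar>)" .
qed

lemma kernel_act_diff:
  assumes "v summable_on S" and "u summable_on S" and "z \<in> S"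
  shows "kernel_act S M (\<lambda>y. v y - u y) z = kernel_act S M v z - kernel_act S M u z"
  unfolding kernel_act_def
  using kernel_act_summable_summand[OF assms(1,3)] kernel_act_summable_summand[OF assms(2,3)]
  by (simp add: left_diff_distrib infsum_diff)

end

lemma nonneg_kernel_rowsum_mult:
  assumes A: "nonneg_kernel_rowsum S A a" and B: "nonneg_kernel_rowsum S B b"
  shows "nonneg_kernel_rowsum S (kernel_mult S A B) (a * b)"
  unfolding nonneg_kernel_rowsum_def
proof (intro conjI ballI)
  fix y z assume "y \<in> S" "z \<in> S"
  then show "0 \<le> kernel_mult S A B y z"
    unfolding kernel_mult_def using kernel_act_nonneg[OF B] kernel_nonneg[OF A] by blast
next
  fix y assume y: "y \<in> S"
  have summable: "A y summable_on S"
    using kernel_row_has_sum[OF A y] by (auto simp: summable_on_def)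
  have "(kernel_act S B (A y) has_sum (b * infsum (A y) S)) S"
    using kernel_act_summable[OF B summable] kernel_act_infsum[OF B summable] by (metis has_sum_infsum)
  then show "(kernel_mult S A B y has_sum a * b) S"
    using kernel_row_has_sum[OF A y] by (simp add: kernel_mult_def infsumI mult.commute)
qed

lemma kernel_act_mult_summable:
  assumes A: "nonneg_kernel_rowsum S A a" and B: "nonneg_kernel_rowsum S B b"
    and v: "v summable_on S" and z: "z \<in> S"
  shows "(\<lambda>(w, y). v y * A y w * B w z) summable_on S \<times> S"
proof -
  have "(\<lambda>(y, w). \<bar>v y\<bar> * A y w * b) summable_on S \<times> S"
    using summable_on_cmult_left[OF kernel_act_abs_summable_product[OF A v], of b]
    by (simp add: case_prod_unfold)
  then have "(\<lambda>(y, w). \<bar>v y * A y w * B w z\<bar>) summable_on S \<times> S"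
  proof (rule summable_on_comparison_test)
    fix x assume "x \<in> S \<times> S"
    then obtain y w where x: "x = (y, w)" "y \<in> S" "w \<in> S" by blast
    then have "0 \<le> A y w" "0 \<le> B w z" "B w z \<le> b"
      using z kernel_nonneg[OF A] kernel_nonneg[OF B] kernel_le_rowsum[OF B] by auto
    then show "(\<lambda>(y, w). \<bar>v y * A y w * B w z\<bar>) x \<le> (\<lambda>(y, w). \<bar>v y\<bar> * A y w * b) x"
      using x by (simp add: abs_mult mult_left_mono)
  qed (simp add: case_prod_unfold)
  then have "(\<lambda>(y, w). v y * A y w * B w z) summable_on S \<times> S"
    using abs_summable_on_real_iff[of "\<lambda>(y, w). v y * A y w * B w z"]
    by (simp add: case_prod_unfold)
  then show ?thesis
    by (subst summable_on_swap) (simp add: case_prod_unfold)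
qed

lemma kernel_act_mult:
  assumes A: "nonneg_kernel_rowsum S A a" and B: "nonneg_kernel_rowsum S B b"
    and v: "v summable_on S" and z: "z \<in> S"
  shows "kernel_act S B (kernel_act S A v) z = kernel_act S (kernel_mult S A B) v z"
proof -
  have "kernel_act S B (kernel_act S A v) z = (\<Sum>\<^sub>\<infinity>w\<in>S. \<Sum>\<^sub>\<infinity>y\<in>S. v y * A y w * B w z)"
    by (simp add: kernel_act_def infsum_cmult_left')
  also have "\<dots> = (\<Sum>\<^sub>\<infinity>y\<in>S. \<Sum>\<^sub>\<infinity>w\<in>S. v y * A y w * B w z)"
    using kernel_act_mult_summable[OF assms] by (intro infsum_swap_banach) simp
  also have "\<dots> = (\<Sum>\<^sub>\<infinity>y\<in>S. v y * (\<Sum>\<^sub>\<infinity>w\<in>S. A y w * B w z))"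
    by (simp add: infsum_cmult_right'[symmetric] mult.assoc)
  also have "\<dots> = kernel_act S (kernel_mult S A B) v z"
    by (simp add: kernel_act_def kernel_mult_def)
  finally show ?thesis .
qed

lemma stochastic_kernel_pow:
  assumes "stochastic_kernel S M"
  shows "stochastic_kernel S (kernel_pow S M n)"
proof (induction n)
  case 0
  then show ?case by (simp add: kernel_pow_0 stochastic_kernel_id)
next
  case (Suc n)
  then show ?case using nonneg_kernel_rowsum_mult[OF Suc.IH assms] by (simp add: kernel_pow_Suc)
qed

lemma kernel_pow_add:
  assumes M: "stochastic_kernel S M" and y: "y \<in> S" and z: "z \<in> S"
  shows "kernel_pow S M (n + k) y z = kernel_mult S (kernel_pow S M n) (kernel_pow S M k) y z"
  using z
proof (induction k arbitrary: z)
  case 0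
  then show ?case by (simp add: kernel_pow_0 kernel_mult_def kernel_act_id)
next
  case (Suc k)
  have row: "kernel_pow S M n y summable_on S"
    using kernel_row_has_sum[OF stochastic_kernel_pow[OF M] y] by (auto simp: summable_on_def)
  have "kernel_pow S M (n + Suc k) y z = kernel_act S M (kernel_pow S M (n + k) y) z"
    by (simp add: kernel_pow_Suc kernel_mult_def)
  also have "\<dots> = kernel_act S M (kernel_mult S (kernel_pow S M n) (kernel_pow S M k) y) z"
    by (rule kernel_act_cong) (simp_all add: Suc.IH)
  also have "\<dots> = kernel_act S (kernel_mult S (kernel_pow S M k) M) (kernel_pow S M n y) z"
    unfolding kernel_mult_def[of S "kernel_pow S M n"]
    by (rule kernel_act_mult[OF stochastic_kernel_pow[OF M] M row Suc.prems])
  finally show ?case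
    by (simp only: kernel_mult_def[of S "kernel_pow S M n"] kernel_pow_Suc[of S M k])
qed

lemma kernel_act_pow_add:
  assumes M: "stochastic_kernel S M" and v: "v summable_on S" and z: "z \<in> S"
  shows "kernel_act S (kernel_pow S M (n + k)) v z
       = kernel_act S (kernel_pow S M k) (kernel_act S (kernel_pow S M n) v) z"
proof -
  have "kernel_act S (kernel_pow S M (n + k)) v z
      = kernel_act S (kernel_mult S (kernel_pow S M n) (kernel_pow S M k)) v z"
    using kernel_pow_add[OF M _ z] by (intro kernel_act_cong) simp_all
  then show ?thesis
    using kernel_act_mult[OF stochastic_kernel_pow[OF M] stochastic_kernel_pow[OF M] v z] by simp
qed

lemma distribution_on_summable: "distribution_on S p \<Longrightarrow> p summable_on S"
  by (auto simp: distribution_on_def summable_on_def)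

lemma distribution_on_infsum: "distribution_on S p \<Longrightarrow> infsum p S = 1"
  by (auto simp: distribution_on_def infsumI)

lemma distribution_on_l1_dist_le_2:
  assumes p: "distribution_on S p" and q: "distribution_on S q"
  shows "(\<Sum>\<^sub>\<infinity>y\<in>S. \<bar>p y - q y\<bar>) \<le> 2"
proof -
  have summable: "p summable_on S" "q summable_on S"
    using p q by (simp_all add: distribution_on_summable)
  have "(\<Sum>\<^sub>\<infinity>y\<in>S. \<bar>p y - q y\<bar>) \<le> (\<Sum>\<^sub>\<infinity>y\<in>S. p y + q y)"
    using p q summable
    by (intro infsum_mono summable_on_add)
      (auto simp: abs_summable_on_real_iff summable_on_diff distribution_on_def abs_le_iff)
  also have "\<dots> = 2"
    using summable p q by (simp add: infsum_add distribution_on_infsum)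
  finally show ?thesis .
qed

lemma stochastic_kernel_row_distribution:
  assumes "stochastic_kernel S M" and "y \<in> S"
  shows "distribution_on S (M y)"
  unfolding distribution_on_def using kernel_nonneg[OF assms] kernel_row_has_sum[OF assms] by simp

lemma kernel_pow_row_summable:
  assumes "stochastic_kernel S M" and "y \<in> S"
  shows "kernel_pow S M k y summable_on S"
  using stochastic_kernel_row_distribution[OF stochastic_kernel_pow[OF assms(1)] assms(2)]
  by (rule distribution_on_summable)

lemma kernel_pow_Suc_ge:
  assumes K: "stochastic_kernel S K" and "y \<in> S" "z \<in> S" "w \<in> S"
  shows "kernel_pow S K k y z * K z w \<le> kernel_pow S K (Suc k) y w"
proof -
  have "((\<lambda>z. kernel_pow S K k y z * K z w) has_sum kernel_pow S K (Suc k) y w) S"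
    using kernel_act_summable_summand[OF K kernel_pow_row_summable[OF K assms(2)] assms(4)] assms(2)
    by (simp add: kernel_pow_Suc kernel_mult_def kernel_act_def)
  from finite_sum_le_has_sum[OF this, of "{z}"] show ?thesis
    using assms kernel_nonneg[OF K] kernel_nonneg[OF stochastic_kernel_pow[OF K]] by simp
qed

lemma kernel_act_mixture_has_sum:
  fixes w :: "nat \<Rightarrow> real" and M :: "nat \<Rightarrow> 'a \<Rightarrow> 'a \<Rightarrow> real"
  assumes M: "\<And>k. stochastic_kernel S (M k)"
    and w: "\<And>k. 0 \<le> w k" and w_sum: "(w has_sum 1) UNIV"
    and R: "\<And>y. y \<in> S \<Longrightarrow> ((\<lambda>k. w k * M k y z) has_sum R y z) UNIV"
    and p: "distribution_on S p" and z: "z \<in> S"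
  shows "((\<lambda>k. w k * kernel_act S (M k) p z) has_sum kernel_act S R p z) UNIV"
proof -
  have p_nonneg: "\<And>y. y \<in> S \<Longrightarrow> 0 \<le> p y" and p_summable: "p summable_on S"
    using p by (auto simp: distribution_on_def distribution_on_summable)
  have R_bounds: "0 \<le> R y z" "R y z \<le> 1" if "y \<in> S" for y
  proof -
    show "0 \<le> R y z"
      by (rule has_sum_nonneg[OF R[OF that]]) (use w kernel_nonneg[OF M that z] in simp)
    show "R y z \<le> 1"
      by (rule has_sum_mono[OF R[OF that] w_sum]) (rule mult_left_le[OF kernel_le_rowsum[OF M that z] w])
  qed
  have "(\<lambda>y. p y * R y z) summable_on S"
  proof (rule summable_on_comparison_test[OF p_summable])
    show "p y * R y z \<le> p y" if "y \<in> S" for y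
      by (rule mult_left_le[OF R_bounds(2)[OF that] p_nonneg[OF that]])
    show "0 \<le> p y * R y z" if "y \<in> S" for y
      using R_bounds(1)[OF that] p_nonneg[OF that] by simp
  qed
  then have outer: "((\<lambda>y. p y * R y z) has_sum kernel_act S R p z) S"
    by (simp add: kernel_act_def)
  have "((\<lambda>k. \<Sum>\<^sub>\<infinity>y\<in>S. (\<lambda>(y, k). p y * (w k * M k y z)) (y, k)) has_sum kernel_act S R p z) UNIV"
  proof (rule has_sum_swap_nonneg(2)[OF _ _ outer])
    show "((\<lambda>k. (\<lambda>(y, k). p y * (w k * M k y z)) (y, k)) has_sum p y * R y z) UNIV" if "y \<in> S" for y
      using has_sum_cmult_right[OF R[OF that], of "p y"] by simp
    show "0 \<le> (\<lambda>(y, k). p y * (w k * M k y z)) (y, k)" if "y \<in> S" for y k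
      using that p_nonneg w kernel_nonneg[OF M that z] by simp
  qed
  moreover have "(\<Sum>\<^sub>\<infinity>y\<in>S. p y * (w k * M k y z)) = w k * kernel_act S (M k) p z" for k
  proof -
    have "(\<Sum>\<^sub>\<infinity>y\<in>S. p y * (w k * M k y z)) = (\<Sum>\<^sub>\<infinity>y\<in>S. w k * (p y * M k y z))"
      by (simp add: mult.left_commute)
    then show ?thesis
      by (simp add: kernel_act_def infsum_cmult_right')
  qed
  ultimately show ?thesis
    by simp
qed

lemma doeblin_contraction:
  assumes M: "stochastic_kernel S M" and y0: "y0 \<in> S"
    and minorization: "\<And>y. y \<in> S \<Longrightarrow> \<epsilon> \<le> M y y0"
    and d: "d summable_on S" and mass_0: "infsum d S = 0"
  shows "(\<Sum>\<^sub>\<infinity>z\<in>S. \<bar>kernel_act S M d z\<bar>) \<le> (1 - \<epsilon>) * (\<Sum>\<^sub>\<infinity>y\<in>S. \<bar>d y\<bar>)"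
proof -
  \<comment> \<open>Removing the mass \<open>\<epsilon>\<close> at \<open>y0\<close> from every row leaves \<open>d M\<close> unchanged, as \<open>d\<close> has total
      mass 0, and leaves a nonnegative kernel with row sums \<open>1 - \<epsilon>\<close>.\<close>
  define M' where "M' y z = M y z - (if z = y0 then \<epsilon> else 0)" for y z
  have M': "nonneg_kernel_rowsum S M' (1 - \<epsilon>)"
    unfolding nonneg_kernel_rowsum_def
  proof (intro conjI ballI)
    show "0 \<le> M' y z" if "y \<in> S" "z \<in> S" for y z
      using that kernel_nonneg[OF M] minorization by (auto simp: M'_def)
    show "(M' y has_sum 1 - \<epsilon>) S" if "y \<in> S" for y
      unfolding M'_def[abs_def]
      by (intro has_sum_diff kernel_row_has_sum[OF M that] has_sum_indicator_point y0)
  qed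
  have "kernel_act S M d z = kernel_act S M' d z" if z: "z \<in> S" for z
  proof -
    have "kernel_act S M d z = (\<Sum>\<^sub>\<infinity>y\<in>S. d y * M' y z + d y * (if z = y0 then \<epsilon> else 0))"
      unfolding kernel_act_def by (intro infsum_cong) (simp add: M'_def algebra_simps)
    also have "\<dots> = kernel_act S M' d z + (\<Sum>\<^sub>\<infinity>y\<in>S. d y) * (if z = y0 then \<epsilon> else 0)"
      unfolding kernel_act_def
      by (subst infsum_add) (auto intro: kernel_act_summable_summand[OF M' d z]
          summable_on_cmult_left d simp: infsum_cmult_left')
    finally show ?thesis using mass_0 by simp
  qed
  then have "(\<Sum>\<^sub>\<infinity>z\<in>S. \<bar>kernel_act S M d z\<bar>) = (\<Sum>\<^sub>\<infinity>z\<in>S. \<bar>kernel_act S M' d z\<bar>)"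
    by (intro infsum_cong) simp
  also have "\<dots> \<le> (1 - \<epsilon>) * (\<Sum>\<^sub>\<infinity>y\<in>S. \<bar>d y\<bar>)"
    by (rule kernel_act_l1_le(2)[OF M' d])
  finally show ?thesis .
qed

section \<open>Kernels satisfying a Doeblin condition\<close>

locale doeblin_kernel =
  fixes S :: "'a set" and K :: "'a \<Rightarrow> 'a \<Rightarrow> real" and m :: nat and y0 :: 'a and \<epsilon> :: real
  assumes stochastic: "stochastic_kernel S K"
    and m_pos: "0 < m" and y0_in_S: "y0 \<in> S" and \<epsilon>_pos: "0 < \<epsilon>"
    and minorization: "\<And>y. y \<in> S \<Longrightarrow> \<epsilon> \<le> kernel_pow S K m y y0"
begin

abbreviation P :: "nat \<Rightarrow> 'a \<Rightarrow> 'a \<Rightarrow> real" where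
  "P n \<equiv> kernel_pow S K n"

lemma stochastic_P: "stochastic_kernel S (P n)"
  by (rule stochastic_kernel_pow[OF stochastic])

lemma \<epsilon>_le_1: "\<epsilon> \<le> 1"
  using minorization[OF y0_in_S] kernel_le_rowsum[OF stochastic_P[of m] y0_in_S y0_in_S] by linarith

lemma decay_bound_tendsto_0: "(\<lambda>n. 2 * (1 - \<epsilon>) ^ (n div m)) \<longlonglongrightarrow> 0"
proof -
  have "(\<lambda>n. (1 - \<epsilon>) ^ (n div m)) \<longlonglongrightarrow> 0"
  proof (rule tendsto_power_zero)
    show "filterlim (\<lambda>n. n div m) at_top sequentially"
      by (rule filterlim_div_nat_at_top[OF m_pos])
    show "norm (1 - \<epsilon>) < 1"
      using \<epsilon>_pos \<epsilon>_le_1 by simp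
  qed
  from tendsto_mult[OF tendsto_const this, of 2] show ?thesis
    by simp
qed

lemma mean_zero_decay:
  assumes "d summable_on S" and "infsum d S = 0"
  shows "(\<Sum>\<^sub>\<infinity>z\<in>S. \<bar>kernel_act S (P n) d z\<bar>) \<le> (1 - \<epsilon>) ^ (n div m) * (\<Sum>\<^sub>\<infinity>y\<in>S. \<bar>d y\<bar>)"
  using assms
proof (induction n arbitrary: d rule: less_induct)
  case (less n)
  show ?case
  proof (cases "n < m")
    case True
    then show ?thesis
      using kernel_act_l1_le(2)[OF stochastic_P less.prems(1)] by simp
  next
    case False
    define d' where "d' = kernel_act S (P m) d"
    have d': "d' summable_on S" "infsum d' S = 0"
      using less.prems kernel_act_summable[OF stochastic_P] kernel_act_infsum[OF stochastic_P]
      by (simp_all add: d'_def)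
    have shift: "kernel_act S (P n) d z = kernel_act S (P (n - m)) d' z" if "z \<in> S" for z
      using kernel_act_pow_add[OF stochastic less.prems(1) that, of m "n - m"] False
      unfolding d'_def by simp
    have "(\<Sum>\<^sub>\<infinity>z\<in>S. \<bar>kernel_act S (P n) d z\<bar>) = (\<Sum>\<^sub>\<infinity>z\<in>S. \<bar>kernel_act S (P (n - m)) d' z\<bar>)"
      by (intro infsum_cong) (simp add: shift)
    also have "\<dots> \<le> (1 - \<epsilon>) ^ ((n - m) div m) * (\<Sum>\<^sub>\<infinity>y\<in>S. \<bar>d' y\<bar>)"
      using False m_pos by (intro less.IH d') auto
    also have "\<dots> \<le> (1 - \<epsilon>) ^ ((n - m) div m) * ((1 - \<epsilon>) * (\<Sum>\<^sub>\<infinity>y\<in>S. \<bar>d y\<bar>))"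
      unfolding d'_def using \<epsilon>_le_1
      by (intro mult_left_mono doeblin_contraction[OF stochastic_P y0_in_S minorization less.prems])
        auto
    also have "\<dots> = (1 - \<epsilon>) ^ (n div m) * (\<Sum>\<^sub>\<infinity>y\<in>S. \<bar>d y\<bar>)"
    proof -
      have "n div m = Suc ((n - m) div m)"
        using le_div_geq[OF m_pos] False by simp
      then show ?thesis by (simp add: mult_ac)
    qed
    finally show ?thesis .
  qed
qed

lemma distributions_merge:
  assumes p: "distribution_on S p" and q: "distribution_on S q"
  shows "(\<lambda>z. \<bar>kernel_act S (P n) p z - kernel_act S (P n) q z\<bar>) summable_on S"
    and "(\<Sum>\<^sub>\<infinity>z\<in>S. \<bar>kernel_act S (P n) p z - kernel_act S (P n) q z\<bar>) \<le> 2 * (1 - \<epsilon>) ^ (n div m)"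
proof -
  have summable: "p summable_on S" "q summable_on S"
    using p q by (simp_all add: distribution_on_summable)
  define d where "d y = p y - q y" for y
  have d: "d summable_on S" "infsum d S = 0"
    unfolding d_def using summable p q by (auto simp: summable_on_diff infsum_diff distribution_on_infsum)
  have act_d: "kernel_act S (P n) d z = kernel_act S (P n) p z - kernel_act S (P n) q z"
    if "z \<in> S" for z
    unfolding d_def using kernel_act_diff[OF stochastic_P summable that] .
  show "(\<lambda>z. \<bar>kernel_act S (P n) p z - kernel_act S (P n) q z\<bar>) summable_on S"
    using summable by (simp add: abs_summable_on_real_iff summable_on_diff kernel_act_summable[OF stochastic_P])
  have "(\<Sum>\<^sub>\<infinity>z\<in>S. \<bar>kernel_act S (P n) p z - kernel_act S (P n) q z\<bar>)
      = (\<Sum>\<^sub>\<infinity>z\<in>S. \<bar>kernel_act S (P n) d z\<bar>)"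
    using act_d by (intro infsum_cong) simp
  also have "\<dots> \<le> (1 - \<epsilon>) ^ (n div m) * (\<Sum>\<^sub>\<infinity>y\<in>S. \<bar>d y\<bar>)"
    by (rule mean_zero_decay[OF d])
  also have "\<dots> \<le> (1 - \<epsilon>) ^ (n div m) * 2"
    using distribution_on_l1_dist_le_2[OF p q] \<epsilon>_le_1 by (intro mult_left_mono) (auto simp: d_def)
  finally show "(\<Sum>\<^sub>\<infinity>z\<in>S. \<bar>kernel_act S (P n) p z - kernel_act S (P n) q z\<bar>) \<le> 2 * (1 - \<epsilon>) ^ (n div m)"
    by simp
qed

lemma P_add_row: "z \<in> S \<Longrightarrow> P (k + n) y0 z = kernel_act S (P n) (P k y0) z"
  using kernel_pow_add[OF stochastic y0_in_S] by (simp add: kernel_mult_def)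

lemma row_tail_bound:
  shows "(\<lambda>z. \<bar>P (k + n) y0 z - P n y0 z\<bar>) summable_on S"
    and "(\<Sum>\<^sub>\<infinity>z\<in>S. \<bar>P (k + n) y0 z - P n y0 z\<bar>) \<le> 2 * (1 - \<epsilon>) ^ (n div m)"
proof -
  have rows: "distribution_on S (P k y0)" "distribution_on S (P 0 y0)"
    by (rule stochastic_kernel_row_distribution[OF stochastic_P y0_in_S])+
  have eq: "\<bar>P (k + n) y0 z - P n y0 z\<bar>
      = \<bar>kernel_act S (P n) (P k y0) z - kernel_act S (P n) (P 0 y0) z\<bar>" if "z \<in> S" for z
    using P_add_row[OF that, of k n] P_add_row[OF that, of 0 n] by simp
  show "(\<lambda>z. \<bar>P (k + n) y0 z - P n y0 z\<bar>) summable_on S"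
    using distributions_merge(1)[OF rows] by (simp only: summable_on_cong[OF eq])
  show "(\<Sum>\<^sub>\<infinity>z\<in>S. \<bar>P (k + n) y0 z - P n y0 z\<bar>) \<le> 2 * (1 - \<epsilon>) ^ (n div m)"
    using distributions_merge(2)[OF rows] by (simp only: infsum_cong[OF eq])
qed

definition limit_distribution :: "'a \<Rightarrow> real" where
  "limit_distribution y = lim (\<lambda>n. P n y0 y)"

lemma P_row_tendsto:
  assumes "y \<in> S"
  shows "(\<lambda>n. P n y0 y) \<longlonglongrightarrow> limit_distribution y"
proof -
  have "\<bar>P (k + n) y0 y - P n y0 y\<bar> \<le> 2 * (1 - \<epsilon>) ^ (n div m)" for n k
  proof -
    have "(\<lambda>z. P (k + n) y0 z - P n y0 z) summable_on S"
      using row_tail_bound(1) by (simp add: abs_summable_on_real_iff)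
    from order.trans[OF abs_le_infsum_abs[OF this assms] row_tail_bound(2)] show ?thesis .
  qed
  then have "Cauchy (\<lambda>n. P n y0 y)"
    using decay_bound_tendsto_0 by (rule Cauchy_if_tail_bound)
  then show ?thesis
    unfolding limit_distribution_def by (simp add: Cauchy_convergent_iff convergent_LIMSEQ_iff)
qed

lemma P_row_summable: "P n y0 summable_on S"
  by (rule kernel_pow_row_summable[OF stochastic y0_in_S])

lemma limit_distribution_nonneg: "y \<in> S \<Longrightarrow> 0 \<le> limit_distribution y"
  using kernel_nonneg[OF stochastic_P y0_in_S] by (intro LIMSEQ_le_const[OF P_row_tendsto]) auto

lemma limit_distribution_l1_close:
  shows "(\<lambda>z. \<bar>limit_distribution z - P n y0 z\<bar>) summable_on S"
    and "(\<Sum>\<^sub>\<infinity>z\<in>S. \<bar>limit_distribution z - P n y0 z\<bar>) \<le> 2 * (1 - \<epsilon>) ^ (n div m)"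
proof -
  have lim: "(\<lambda>k. P (k + n) y0 z - P n y0 z) \<longlonglongrightarrow> limit_distribution z - P n y0 z"
    if "z \<in> S" for z
    using LIMSEQ_ignore_initial_segment[OF P_row_tendsto[OF that], of n] by (intro tendsto_diff) auto
  have summable: "(\<lambda>z. P (k + n) y0 z - P n y0 z) summable_on S" for k
    using row_tail_bound(1) by (simp add: abs_summable_on_real_iff)
  show "(\<lambda>z. \<bar>limit_distribution z - P n y0 z\<bar>) summable_on S"
    by (rule infsum_abs_le_of_tendsto(1)[OF lim summable row_tail_bound(2)])
  show "(\<Sum>\<^sub>\<infinity>z\<in>S. \<bar>limit_distribution z - P n y0 z\<bar>) \<le> 2 * (1 - \<epsilon>) ^ (n div m)"
    by (rule infsum_abs_le_of_tendsto(2)[OF lim summable row_tail_bound(2)])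
qed

lemma limit_distribution_summable: "limit_distribution summable_on S"
proof -
  have "(\<lambda>z. (limit_distribution z - P 0 y0 z) + P 0 y0 z) summable_on S"
    using limit_distribution_l1_close(1)[of 0] P_row_summable
    by (intro summable_on_add) (auto simp: abs_summable_on_real_iff)
  then show ?thesis by simp
qed

lemma P_row_close: "y \<in> S \<Longrightarrow> \<bar>P n y0 y - limit_distribution y\<bar> \<le> 2 * (1 - \<epsilon>) ^ (n div m)"
  using order.trans[OF abs_le_infsum_abs limit_distribution_l1_close(2)]
    summable_on_diff[OF limit_distribution_summable P_row_summable]
  by (simp add: abs_minus_commute)

lemma distribution_on_limit_distribution: "distribution_on S limit_distribution"
proof -
  have "infsum limit_distribution S - 1 = 0"
  proof (rule eq_0_if_abs_le_null_sequence[OF _ decay_bound_tendsto_0])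
    fix n
    have row: "distribution_on S (P n y0)"
      by (rule stochastic_kernel_row_distribution[OF stochastic_P y0_in_S])
    have "\<bar>infsum limit_distribution S - 1\<bar> = \<bar>\<Sum>\<^sub>\<infinity>z\<in>S. limit_distribution z - P n y0 z\<bar>"
      using row limit_distribution_summable
      by (simp add: infsum_diff distribution_on_summable distribution_on_infsum)
    also have "\<dots> \<le> (\<Sum>\<^sub>\<infinity>z\<in>S. \<bar>limit_distribution z - P n y0 z\<bar>)"
      using norm_infsum_bound[of "\<lambda>z. limit_distribution z - P n y0 z" S]
        limit_distribution_l1_close(1)[of n] by simp
    also have "\<dots> \<le> 2 * (1 - \<epsilon>) ^ (n div m)"
      by (rule limit_distribution_l1_close(2))
    finally show "\<bar>infsum limit_distribution S - 1\<bar> \<le> 2 * (1 - \<epsilon>) ^ (n div m)" .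
  qed
  then show ?thesis
    using has_sum_infsum[OF limit_distribution_summable] limit_distribution_nonneg
    by (simp add: distribution_on_def)
qed

lemma limit_distribution_invariant:
  assumes y: "y \<in> S"
  shows "kernel_act S K limit_distribution y = limit_distribution y"
proof -
  let ?b = "\<lambda>n. 2 * (1 - \<epsilon>) ^ (n div m)"
  have step: "\<bar>kernel_act S K limit_distribution y - P (Suc n) y0 y\<bar> \<le> ?b n" for n
  proof -
    define d where "d z = limit_distribution z - P n y0 z" for z
    have d: "d summable_on S"
      unfolding d_def by (intro summable_on_diff limit_distribution_summable P_row_summable)
    have "\<bar>kernel_act S K limit_distribution y - P (Suc n) y0 y\<bar> = \<bar>kernel_act S K d y\<bar>"
      using kernel_act_diff[OF stochastic limit_distribution_summable P_row_summable y]
      by (simp add: d_def[abs_def] kernel_pow_Suc kernel_mult_def)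
    also have "\<dots> \<le> (\<Sum>\<^sub>\<infinity>z\<in>S. \<bar>kernel_act S K d z\<bar>)"
      by (rule abs_le_infsum_abs[OF kernel_act_summable[OF stochastic d] y])
    also have "\<dots> \<le> 1 * (\<Sum>\<^sub>\<infinity>z\<in>S. \<bar>d z\<bar>)"
      by (rule kernel_act_l1_le(2)[OF stochastic d])
    also have "\<dots> \<le> ?b n"
      using limit_distribution_l1_close(2) by (simp add: d_def)
    finally show ?thesis .
  qed
  have "kernel_act S K limit_distribution y - limit_distribution y = 0"
  proof (rule eq_0_if_abs_le_null_sequence)
    show "\<bar>kernel_act S K limit_distribution y - limit_distribution y\<bar> \<le> ?b n + ?b (Suc n)" for n
      using step[of n] P_row_close[OF y, of "Suc n"] by linarith
    show "(\<lambda>n. ?b n + ?b (Suc n)) \<longlonglongrightarrow> 0"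
      by (intro tendsto_add_zero decay_bound_tendsto_0 LIMSEQ_Suc)
  qed
  then show ?thesis by simp
qed

lemma limit_distribution_invariant_P:
  assumes y: "y \<in> S"
  shows "kernel_act S (P n) limit_distribution y = limit_distribution y"
  using y
proof (induction n arbitrary: y)
  case 0
  then show ?case by (simp add: kernel_pow_0 kernel_act_id)
next
  case (Suc n)
  have "kernel_act S (P (Suc n)) limit_distribution y
      = kernel_act S K (kernel_act S (P n) limit_distribution) y"
    unfolding kernel_pow_Suc
    by (rule kernel_act_mult[OF stochastic_P stochastic limit_distribution_summable Suc.prems, symmetric])
  also have "\<dots> = kernel_act S K limit_distribution y"
    by (rule kernel_act_cong) (simp_all add: Suc.IH)
  finally show ?case
    using limit_distribution_invariant[OF Suc.prems] by simp
qed

lemma convergence_to_limit_distribution: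
  assumes p: "distribution_on S p"
  shows "(\<lambda>z. \<bar>kernel_act S (P n) p z - limit_distribution z\<bar>) summable_on S"
    and "(\<Sum>\<^sub>\<infinity>z\<in>S. \<bar>kernel_act S (P n) p z - limit_distribution z\<bar>) \<le> 2 * (1 - \<epsilon>) ^ (n div m)"
proof -
  have eq: "\<bar>kernel_act S (P n) p z - limit_distribution z\<bar>
      = \<bar>kernel_act S (P n) p z - kernel_act S (P n) limit_distribution z\<bar>" if "z \<in> S" for z
    using limit_distribution_invariant_P[OF that] by simp
  show "(\<lambda>z. \<bar>kernel_act S (P n) p z - limit_distribution z\<bar>) summable_on S"
    using distributions_merge(1)[OF p distribution_on_limit_distribution]
    by (simp only: summable_on_cong[OF eq])
  show "(\<Sum>\<^sub>\<infinity>z\<in>S. \<bar>kernel_act S (P n) p z - limit_distribution z\<bar>) \<le> 2 * (1 - \<epsilon>) ^ (n div m)"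
    using distributions_merge(2)[OF p distribution_on_limit_distribution]
    by (simp only: infsum_cong[OF eq])
qed

definition mixing_base :: real where
  "mixing_base = (1 - \<epsilon> / 2) powr (1 / m)"

lemma mixing_base_bounds: "0 < mixing_base" "mixing_base < 1"
  using \<epsilon>_pos \<epsilon>_le_1 m_pos by (auto simp: mixing_base_def powr01_less_one)

lemma poisson_mixture_convergence:
  assumes \<Lambda>: "0 \<le> \<Lambda>" and t: "0 \<le> t" and p: "distribution_on S p"
    and L: "\<And>z. z \<in> S \<Longrightarrow> ((\<lambda>k. poisson_weight (\<Lambda> * t) k * kernel_act S (P k) p z) has_sum L z) UNIV"
  shows "(\<lambda>z. \<bar>L z - limit_distribution z\<bar>) summable_on S"
    and "(\<Sum>\<^sub>\<infinity>z\<in>S. \<bar>L z - limit_distribution z\<bar>)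
          \<le> 2 / (1 - \<epsilon> / 2) * exp (- (\<Lambda> * (1 - mixing_base)) * t)"
proof -
  \<comment> \<open>The rate \<open>1 - \<epsilon>\<close> is replaced by the larger \<open>r\<close>, which stays positive when \<open>\<epsilon> = 1\<close>.\<close>
  define r where "r = 1 - \<epsilon> / 2"
  have r: "0 < r" "1 - \<epsilon> \<le> r"
    using \<epsilon>_pos \<epsilon>_le_1 by (auto simp: r_def)
  let ?w = "poisson_weight (\<Lambda> * t)"
  have w: "0 \<le> ?w k" for k
    using \<Lambda> t by (simp add: poisson_weight_nonneg)
  have mixture: "((\<lambda>k. ?w k * (kernel_act S (P k) p z - limit_distribution z))
      has_sum L z - limit_distribution z) UNIV" if "z \<in> S" for z
    using has_sum_diff[OF L[OF that] has_sum_cmult_left[OF poisson_weight_has_sum]] \<Lambda> t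
    by (simp add: right_diff_distrib)
  have bound: "(\<Sum>\<^sub>\<infinity>z\<in>S. \<bar>kernel_act S (P k) p z - limit_distribution z\<bar>) \<le> 2 / r * mixing_base ^ k"
    for k
  proof -
    have "(1 - \<epsilon>) ^ (k div m) \<le> r ^ (k div m)"
      using r \<epsilon>_le_1 by (intro power_mono) auto
    also have "\<dots> \<le> mixing_base ^ k / r"
      unfolding mixing_base_def r_def[symmetric] using r \<epsilon>_le_1 m_pos
      by (intro power_div_le_powr_power) (auto simp: r_def)
    finally show ?thesis
      using convergence_to_limit_distribution(2)[OF p, of k] by simp
  qed
  have "((\<lambda>k. ?w k * (2 / r * mixing_base ^ k))
      has_sum 2 / r * exp (- (\<Lambda> * (1 - mixing_base)) * t)) UNIV"
    using has_sum_cmult_right[OF poisson_weight_geometric_has_sum[of "\<Lambda> * t" mixing_base], of "2 / r"]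
      \<Lambda> t mixing_base_bounds by (simp add: algebra_simps)
  note mixture_le = infsum_abs_mixture_le[OF w _ mixture this bound]
  have "(\<lambda>z. kernel_act S (P k) p z - limit_distribution z) summable_on S" for k
    using convergence_to_limit_distribution(1)[OF p] by (simp add: abs_summable_on_real_iff)
  then show "(\<lambda>z. \<bar>L z - limit_distribution z\<bar>) summable_on S"
    and "(\<Sum>\<^sub>\<infinity>z\<in>S. \<bar>L z - limit_distribution z\<bar>)
          \<le> 2 / (1 - \<epsilon> / 2) * exp (- (\<Lambda> * (1 - mixing_base)) * t)"
    using mixture_le by (simp_all add: r_def)
qed

end

section \<open>Uniformization\<close>

context
  fixes S :: "'a set" and K Q :: "'a \<Rightarrow> 'a \<Rightarrow> real" and \<Lambda> :: real
  assumes K: "stochastic_kernel S K"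
    and Q: "\<And>z w. z \<in> S \<Longrightarrow> w \<in> S \<Longrightarrow> Q z w = \<Lambda> * (K z w - (if z = w then 1 else 0))"
begin

lemma kernel_pow_times_generator_has_sum:
  assumes y: "y \<in> S" and y': "y' \<in> S"
  shows "((\<lambda>z. kernel_pow S K k y z * Q z y')
          has_sum \<Lambda> * (kernel_pow S K (Suc k) y y' - kernel_pow S K k y y')) S"
proof -
  have "((\<lambda>z. kernel_pow S K k y z * K z y') has_sum kernel_pow S K (Suc k) y y') S"
    using kernel_act_summable_summand[OF K kernel_pow_row_summable[OF K y] y']
    by (simp add: kernel_pow_Suc kernel_mult_def kernel_act_def)
  moreover have "((\<lambda>z. kernel_pow S K k y z * (if z = y' then 1 else 0)) has_sum kernel_pow S K k y y') S"
    using has_sum_indicator_point[OF y', of "kernel_pow S K k y y'"]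
    by (simp add: if_distrib cong: if_cong)
  ultimately have "((\<lambda>z. \<Lambda> * (kernel_pow S K k y z * K z y' - kernel_pow S K k y z * (if z = y' then 1 else 0)))
      has_sum \<Lambda> * (kernel_pow S K (Suc k) y y' - kernel_pow S K k y y')) S"
    by (intro has_sum_cmult_right has_sum_diff)
  then show ?thesis
    by (rule has_sum_cong[THEN iffD1, rotated]) (simp add: Q y' algebra_simps)
qed

lemma kernel_pow_uniformized:
  assumes y: "y \<in> S" and y': "y' \<in> S"
  shows "kernel_pow S Q n y y'
       = (\<Sum>k\<le>n. real (n choose k) * \<Lambda> ^ k * (- \<Lambda>) ^ (n - k) * kernel_pow S K k y y')"
  using y'
proof (induction n arbitrary: y')
  case 0
  then show ?case by (simp add: kernel_pow_0)
next
  case (Suc n)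
  let ?c = "\<lambda>k. real (n choose k) * \<Lambda> ^ k * (- \<Lambda>) ^ (n - k)"
  have "kernel_pow S Q (Suc n) y y' = (\<Sum>\<^sub>\<infinity>z\<in>S. \<Sum>k\<le>n. ?c k * (kernel_pow S K k y z * Q z y'))"
    unfolding kernel_pow_Suc kernel_mult_def kernel_act_def
    by (intro infsum_cong) (simp add: Suc.IH sum_distrib_right mult.assoc)
  also have "\<dots> = (\<Sum>k\<le>n. ?c k * (\<Lambda> * (kernel_pow S K (Suc k) y y' - kernel_pow S K k y y')))"
    by (intro infsumI has_sum_sum has_sum_cmult_right kernel_pow_times_generator_has_sum y Suc.prems)
      simp
  also have "\<dots> = (\<Sum>k\<le>n. ?c k * (\<Lambda> * kernel_pow S K (Suc k) y y' + (- \<Lambda>) * kernel_pow S K k y y'))"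
    by (simp add: algebra_simps)
  also have "\<dots> = (\<Sum>k\<le>Suc n. real (Suc n choose k) * \<Lambda> ^ k * (- \<Lambda>) ^ (Suc n - k) * kernel_pow S K k y y')"
    using binomial_convolution_Suc[of n \<Lambda> "- \<Lambda>" "\<lambda>k. kernel_pow S K k y y'"] by (simp add: mult.assoc)
  finally show ?case .
qed

lemma exp_series_uniformized:
  assumes y: "y \<in> S" and y': "y' \<in> S" and \<Lambda>: "0 \<le> \<Lambda>" and t: "0 \<le> t"
  shows "((\<lambda>k. poisson_weight (\<Lambda> * t) k * kernel_pow S K k y y')
          has_sum (\<Sum>n. t ^ n / fact n * kernel_pow S Q n y y')) UNIV"
proof -
  define a where "a k = (\<Lambda> * t) ^ k / fact k * kernel_pow S K k y y'" for k
  define b where "b k = (- (\<Lambda> * t)) ^ k / fact k" for k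
  have pow_bounds: "0 \<le> kernel_pow S K k y y'" "kernel_pow S K k y y' \<le> 1" for k
    using kernel_nonneg[OF stochastic_kernel_pow[OF K] y y'] kernel_le_rowsum[OF stochastic_kernel_pow[OF K] y y']
    by auto
  have a_nonneg: "0 \<le> a k" for k
    using pow_bounds \<Lambda> t by (simp add: a_def)
  have exp_summable: "summable (\<lambda>k. (\<Lambda> * t) ^ k / fact k)"
    using exp_series_sums sums_summable by blast
  have a: "summable (\<lambda>k. norm (a k))"
  proof (rule summable_comparison_test[OF _ exp_summable])
    show "\<exists>N. \<forall>k\<ge>N. norm (norm (a k)) \<le> (\<Lambda> * t) ^ k / fact k"
      using a_nonneg pow_bounds \<Lambda> t by (auto simp: a_def intro!: mult_left_le divide_right_mono)
  qed
  have b: "summable (\<lambda>k. norm (b k))"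
    using exp_summable \<Lambda> t by (simp add: b_def norm_divide norm_power)
  have sum_b: "suminf b = exp (- (\<Lambda> * t))"
    unfolding b_def using exp_series_sums sums_unique by metis
  have "(\<Sum>i\<le>n. a i * b (n - i)) = t ^ n / fact n * kernel_pow S Q n y y'" for n
    unfolding a_def b_def kernel_pow_uniformized[OF y y'] by (rule exp_cauchy_product_coeff)
  then have "(\<lambda>n. t ^ n / fact n * kernel_pow S Q n y y') sums (suminf a * exp (- (\<Lambda> * t)))"
    using Cauchy_product_sums[OF a b] sum_b by simp
  then have "(\<Sum>n. t ^ n / fact n * kernel_pow S Q n y y') = exp (- (\<Lambda> * t)) * suminf a"
    by (simp add: sums_unique[symmetric] mult.commute)
  moreover have "(\<lambda>k. exp (- (\<Lambda> * t)) * a k) sums (exp (- (\<Lambda> * t)) * suminf a)"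
    by (rule sums_mult[OF summable_sums[OF summable_norm_cancel[OF a]]])
  then have "(\<lambda>k. poisson_weight (\<Lambda> * t) k * kernel_pow S K k y y') sums (exp (- (\<Lambda> * t)) * suminf a)"
    by (simp add: a_def poisson_weight_def mult.assoc)
  ultimately show ?thesis
    using poisson_weight_nonneg pow_bounds \<Lambda> t
    by (intro sums_nonneg_imp_has_sum) auto
qed

end

section \<open>The relative-coordinate chain\<close>

lemma rel_in_Gamma:
  assumes "length x = N" and "0 < N"
  shows "rel x \<in> Gamma N"
proof -
  have ne: "set x \<noteq> {}" using assms by auto
  then have "0 \<in> set (rel x)"
    unfolding rel_def using Min_in[of "set x"] by force
  moreover have "\<forall>a\<in>set (rel x). 0 \<le> a"
    unfolding rel_def using ne by auto
  ultimately show ?thesis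
    using assms by (simp add: Gamma_def rel_def)
qed

lemma rel_Gamma:
  assumes "z \<in> Gamma N"
  shows "rel z = z"
proof -
  have "Min (set z) = 0"
    using assms unfolding Gamma_def by (intro Min_eqI) auto
  then show ?thesis by (simp add: rel_def)
qed

lemma Gamma_nonneg: "y \<in> Gamma N \<Longrightarrow> i < N \<Longrightarrow> 0 \<le> y ! i"
  unfolding Gamma_def by auto

lemma Gamma_has_zero:
  assumes "y \<in> Gamma N"
  obtains j where "j < N" and "y ! j = 0"
  using assms unfolding Gamma_def by (metis (mono_tags, lifting) in_set_conv_nth mem_Collect_eq)

lemma Qpow_eq_kernel_pow: "Qpow N \<alpha> \<beta> \<mu> n = kernel_pow (Gamma N) (Qy N \<alpha> \<beta> \<mu>) n"
proof (induction n)
  case 0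
  then show ?case by (simp add: kernel_pow_0 fun_eq_iff)
next
  case (Suc n)
  then show ?case by (simp add: kernel_pow_Suc kernel_mult_def kernel_act_def fun_eq_iff)
qed

lemma is_distr_iff_distribution_on: "is_distr N p \<longleftrightarrow> distribution_on (Gamma N) p"
  by (simp add: is_distr_def distribution_on_def)

lemma law_eq_kernel_act: "law N \<alpha> \<beta> \<mu> t p = kernel_act (Gamma N) (Pt N \<alpha> \<beta> \<mu> t) p"
  by (simp add: law_def kernel_act_def fun_eq_iff)

locale particle_system =
  fixes N :: nat and \<alpha> \<beta> \<mu> :: real
  assumes \<alpha>_pos: "0 < \<alpha>" and \<beta>_pos: "0 < \<beta>" and \<mu>_pos: "0 < \<mu>" and N_ge_2: "2 \<le> N"
begin

definition max_rate :: real where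
  "max_rate = real N * (\<alpha> + \<beta> + \<mu>)"

definition \<Lambda> :: real where
  "\<Lambda> = max_rate + 1"

definition jump_kernel :: "int list \<Rightarrow> int list \<Rightarrow> real" where
  "jump_kernel z y' = (if z = y' then 1 else 0) + Qy N \<alpha> \<beta> \<mu> z y' / \<Lambda>"

lemma max_rate_nonneg: "0 \<le> max_rate"
  using \<alpha>_pos \<beta>_pos \<mu>_pos by (simp add: max_rate_def)

lemma \<Lambda>_pos: "0 < \<Lambda>"
  using max_rate_nonneg by (simp add: \<Lambda>_def)

lemma Qy_eq_jump_kernel: "Qy N \<alpha> \<beta> \<mu> z y' = \<Lambda> * (jump_kernel z y' - (if z = y' then 1 else 0))"
  using \<Lambda>_pos by (simp add: jump_kernel_def)

lemma trans_mem:
  assumes "(r, x') \<in> set (trans N \<alpha> \<beta> \<mu> z)"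
  shows "0 \<le> r" and "length x' = length z"
  using assms \<alpha>_pos \<beta>_pos \<mu>_pos by (auto simp: trans_def)

lemma total_rate_le: "(\<Sum>e\<leftarrow>trans N \<alpha> \<beta> \<mu> z. fst e) \<le> max_rate"
proof -
  let ?moves = "\<lambda>i. length (filter (\<lambda>j. j \<noteq> i \<and> z ! i > z ! j) [0..<N])"
  have "(\<Sum>e\<leftarrow>trans N \<alpha> \<beta> \<mu> z. fst e) = (\<Sum>i\<leftarrow>[0..<N]. \<alpha> + \<beta> + \<mu> / real N * real (?moves i))"
    unfolding trans_def by (simp add: sum_list_map_concat o_def sum_list_triv algebra_simps)
  also have "\<dots> = (\<Sum>i<N. \<alpha> + \<beta> + \<mu> / real N * real (?moves i))"
    by (simp add: lessThan_atLeast0 sum_set_upt_conv_sum_list_nat[symmetric])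
  also have "\<dots> \<le> (\<Sum>i<N. \<alpha> + \<beta> + \<mu>)"
  proof (rule sum_mono)
    fix i
    have "\<mu> / real N * real (?moves i) \<le> \<mu> / real N * real N"
      using \<mu>_pos length_filter_le[of _ "[0..<N]"] by (intro mult_left_mono) auto
    then show "\<alpha> + \<beta> + \<mu> / real N * real (?moves i) \<le> \<alpha> + \<beta> + \<mu>"
      using N_ge_2 by simp
  qed
  also have "\<dots> = max_rate"
    by (simp add: max_rate_def)
  finally show ?thesis .
qed

lemma Qy_nonneg:
  assumes "z \<noteq> y'"
  shows "0 \<le> Qy N \<alpha> \<beta> \<mu> z y'"
  unfolding Qy_def using assms trans_mem(1) by (intro sum_list_nonneg) auto

lemma Qy_diag_ge: "- max_rate \<le> Qy N \<alpha> \<beta> \<mu> z z"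
proof -
  have "- max_rate \<le> (\<Sum>e\<leftarrow>trans N \<alpha> \<beta> \<mu> z. - fst e)"
    using total_rate_le[of z] by (simp add: uminus_sum_list_map[of fst, unfolded o_def, symmetric])
  also have "\<dots> \<le> Qy N \<alpha> \<beta> \<mu> z z"
    unfolding Qy_def using trans_mem(1) by (intro sum_list_mono) auto
  finally show ?thesis .
qed

lemma Qy_row_has_sum:
  assumes z: "z \<in> Gamma N"
  shows "(Qy N \<alpha> \<beta> \<mu> z has_sum 0) (Gamma N)"
proof -
  have "((\<lambda>y'. case e of (r, x') \<Rightarrow> r * ((if rel x' = y' then 1 else 0) - (if y' = z then 1 else 0)))
      has_sum 0) (Gamma N)" if "e \<in> set (trans N \<alpha> \<beta> \<mu> z)" for e
  proof (cases e)
    case (Pair r x')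
    have "rel x' \<in> Gamma N"
      using trans_mem(2)[OF that[unfolded Pair]] z N_ge_2 by (intro rel_in_Gamma) (auto simp: Gamma_def)
    then have "((\<lambda>y'. if rel x' = y' then 1 else 0) has_sum 1) (Gamma N)"
      by (intro has_sum_finite_neutralI[where B = "{rel x'}"]) auto
    from has_sum_cmult_right[OF has_sum_diff[OF this has_sum_indicator_point[OF z, of 1]], of r]
    show ?thesis by (simp add: Pair)
  qed
  from has_sum_sum_list[OF this] show ?thesis
    by (simp add: Qy_def[abs_def])
qed

lemma jump_kernel_diag_ge: "1 / \<Lambda> \<le> jump_kernel z z"
proof -
  have "1 / \<Lambda> = 1 - max_rate / \<Lambda>"
    using \<Lambda>_pos by (simp add: \<Lambda>_def field_simps)
  also have "\<dots> \<le> 1 + Qy N \<alpha> \<beta> \<mu> z z / \<Lambda>"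
    using divide_right_mono[OF Qy_diag_ge[of z], of \<Lambda>] \<Lambda>_pos by simp
  also have "\<dots> = jump_kernel z z"
    by (simp add: jump_kernel_def)
  finally show ?thesis .
qed

lemma jump_kernel_stochastic: "stochastic_kernel (Gamma N) jump_kernel"
  unfolding nonneg_kernel_rowsum_def
proof (intro conjI ballI)
  fix z y' assume "z \<in> Gamma N" "y' \<in> Gamma N"
  show "0 \<le> jump_kernel z y'"
  proof (cases "z = y'")
    case True
    then show ?thesis
      using order.trans[OF _ jump_kernel_diag_ge[of z], of 0] \<Lambda>_pos by simp
  next
    case False
    then show ?thesis
      using Qy_nonneg \<Lambda>_pos by (simp add: jump_kernel_def)
  qed
next
  fix z assume z: "z \<in> Gamma N"
  have "((\<lambda>y'. if z = y' then 1 else 0) has_sum 1) (Gamma N)"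
    using z by (intro has_sum_finite_neutralI[where B = "{z}"]) auto
  from has_sum_add[OF this has_sum_divide_const[OF Qy_row_has_sum[OF z], of \<Lambda>]]
  show "(jump_kernel z has_sum 1) (Gamma N)"
    by (simp add: jump_kernel_def[abs_def])
qed

lemma jump_kernel_merge_ge:
  assumes z: "z \<in> Gamma N" and k: "k < N" and j: "j < N"
    and zj: "z ! j = 0" and zk: "0 < z ! k"
  shows "\<mu> / (real N * \<Lambda>) \<le> jump_kernel z (z[k := 0])"
proof -
  let ?z' = "z[k := 0]"
  have len: "length z = N"
    using z by (simp add: Gamma_def)
  have ne: "z \<noteq> ?z'"
    using zk k len by (metis less_irrefl nth_list_update_eq)
  have "?z' \<in> Gamma N"
    using z len k set_update_subset_insert[of z k 0] by (auto simp: Gamma_def set_update_memI)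
  then have rel_z': "rel ?z' = ?z'"
    by (rule rel_Gamma)
  have "j \<in> set (filter (\<lambda>j. j \<noteq> k \<and> z ! k > z ! j) [0..<N])"
    using j zj zk by auto
  then have "(\<mu> / real N, z[k := z ! j]) \<in> set (trans N \<alpha> \<beta> \<mu> z)"
    unfolding trans_def using k by force
  then have "\<mu> / real N \<in> set (map (\<lambda>(r, x'). r * ((if rel x' = ?z' then 1 else 0)
      - (if ?z' = z then 1 else 0))) (trans N \<alpha> \<beta> \<mu> z))"
    using zj rel_z' ne by force
  then have "\<mu> / real N \<le> Qy N \<alpha> \<beta> \<mu> z ?z'"
    unfolding Qy_def using trans_mem(1) ne by (intro member_le_sum_list) auto
  then have "\<mu> / real N / \<Lambda> \<le> Qy N \<alpha> \<beta> \<mu> z ?z' / \<Lambda>"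
    using \<Lambda>_pos by (intro divide_right_mono) auto
  then show ?thesis
    using ne by (simp add: jump_kernel_def)
qed

definition doeblin_const :: real where
  "doeblin_const = min (1 / \<Lambda>) (\<mu> / (real N * \<Lambda>))"

definition zero_prefix :: "nat \<Rightarrow> int list \<Rightarrow> int list" where
  "zero_prefix k y = map (\<lambda>i. if i < k then 0 else y ! i) [0..<N]"

lemma doeblin_const_pos: "0 < doeblin_const"
  using \<Lambda>_pos \<mu>_pos N_ge_2 by (simp add: doeblin_const_def)

lemma zero_prefix_Gamma:
  assumes y: "y \<in> Gamma N"
  shows "zero_prefix k y \<in> Gamma N"
proof -
  obtain j where j: "j < N" "y ! j = 0"
    using Gamma_has_zero[OF y] .
  then have "0 \<in> set (zero_prefix k y)"
    unfolding zero_prefix_def by (force simp: in_set_conv_nth)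
  then show ?thesis
    using Gamma_nonneg[OF y] by (auto simp: Gamma_def zero_prefix_def)
qed

lemma zero_prefix_0: "y \<in> Gamma N \<Longrightarrow> zero_prefix 0 y = y"
  by (intro nth_equalityI) (auto simp: zero_prefix_def Gamma_def)

lemma zero_prefix_N: "zero_prefix N y = replicate N 0"
  by (intro nth_equalityI) (auto simp: zero_prefix_def)

lemma zero_prefix_step_ge:
  assumes y: "y \<in> Gamma N"
  shows "doeblin_const \<le> jump_kernel (zero_prefix k y) (zero_prefix (Suc k) y)"
proof (cases "k < N \<and> y ! k \<noteq> 0")
  case False
  then have "zero_prefix (Suc k) y = zero_prefix k y"
    by (intro nth_equalityI) (auto simp: zero_prefix_def less_Suc_eq)
  then show ?thesis
    using jump_kernel_diag_ge[of "zero_prefix k y"] by (simp add: doeblin_const_def)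
next
  case True
  then have k: "k < N" and yk: "0 < y ! k"
    using Gamma_nonneg[OF y, of k] by auto
  obtain j where j: "j < N" "y ! j = 0"
    using Gamma_has_zero[OF y] .
  have "zero_prefix (Suc k) y = (zero_prefix k y)[k := 0]"
    by (intro nth_equalityI) (auto simp: zero_prefix_def less_Suc_eq nth_list_update)
  moreover have "\<mu> / (real N * \<Lambda>) \<le> jump_kernel (zero_prefix k y) ((zero_prefix k y)[k := 0])"
    by (rule jump_kernel_merge_ge[OF zero_prefix_Gamma[OF y] k j(1)])
      (use j k yk in \<open>auto simp: zero_prefix_def\<close>)
  ultimately show ?thesis
    by (simp add: doeblin_const_def)
qed

lemma kernel_pow_zero_prefix_ge:
  assumes y: "y \<in> Gamma N"
  shows "doeblin_const ^ k \<le> kernel_pow (Gamma N) jump_kernel k y (zero_prefix k y)"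
proof (induction k)
  case 0
  then show ?case by (simp add: kernel_pow_0 zero_prefix_0[OF y])
next
  case (Suc k)
  have "doeblin_const ^ Suc k
      \<le> kernel_pow (Gamma N) jump_kernel k y (zero_prefix k y) * jump_kernel (zero_prefix k y) (zero_prefix (Suc k) y)"
    unfolding power_Suc2
    using Suc.IH zero_prefix_step_ge[OF y, of k] doeblin_const_pos
      kernel_nonneg[OF stochastic_kernel_pow[OF jump_kernel_stochastic] y zero_prefix_Gamma[OF y]]
    by (intro mult_mono) auto
  also have "\<dots> \<le> kernel_pow (Gamma N) jump_kernel (Suc k) y (zero_prefix (Suc k) y)"
    by (intro kernel_pow_Suc_ge jump_kernel_stochastic y zero_prefix_Gamma)
  finally show ?case .
qed

sublocale doeblin_kernel "Gamma N" jump_kernel N "replicate N 0" "doeblin_const ^ N"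
proof
  show "replicate N 0 \<in> Gamma N"
    using N_ge_2 by (auto simp: Gamma_def)
  show "doeblin_const ^ N \<le> kernel_pow (Gamma N) jump_kernel N y (replicate N 0)" if "y \<in> Gamma N" for y
    using kernel_pow_zero_prefix_ge[OF that, of N] by (simp add: zero_prefix_N)
qed (use jump_kernel_stochastic N_ge_2 doeblin_const_pos in auto)

lemma Pt_poisson_mixture:
  assumes t: "0 \<le> t" and y: "y \<in> Gamma N" and y': "y' \<in> Gamma N"
  shows "((\<lambda>k. poisson_weight (\<Lambda> * t) k * P k y y') has_sum Pt N \<alpha> \<beta> \<mu> t y y') UNIV"
proof -
  have Q: "\<And>z w. z \<in> Gamma N \<Longrightarrow> w \<in> Gamma N \<Longrightarrow>
      Qy N \<alpha> \<beta> \<mu> z w = \<Lambda> * (jump_kernel z w - (if z = w then 1 else 0))"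
    by (rule Qy_eq_jump_kernel)
  show ?thesis
    using exp_series_uniformized[OF jump_kernel_stochastic Q y y' _ t] \<Lambda>_pos
    by (simp add: Pt_def Qpow_eq_kernel_pow)
qed

lemma law_poisson_mixture:
  assumes t: "0 \<le> t" and p: "distribution_on (Gamma N) p" and z: "z \<in> Gamma N"
  shows "((\<lambda>k. poisson_weight (\<Lambda> * t) k * kernel_act (Gamma N) (P k) p z)
          has_sum law N \<alpha> \<beta> \<mu> t p z) UNIV"
proof -
  have "0 \<le> \<Lambda> * t"
    using \<Lambda>_pos t by simp
  then show ?thesis
    unfolding law_eq_kernel_act
    by (intro kernel_act_mixture_has_sum[where M = P] stochastic_P poisson_weight_nonneg
        poisson_weight_has_sum Pt_poisson_mixture[OF t] p z)
qed

lemma limit_distribution_stationary: "stationary N \<alpha> \<beta> \<mu> limit_distribution"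
  unfolding stationary_def is_distr_iff_distribution_on
proof (intro conjI allI impI ballI distribution_on_limit_distribution)
  fix t :: real and y assume t: "0 \<le> t" and y: "y \<in> Gamma N"
  have "((\<lambda>k. poisson_weight (\<Lambda> * t) k * limit_distribution y) has_sum law N \<alpha> \<beta> \<mu> t limit_distribution y) UNIV"
    using law_poisson_mixture[OF t distribution_on_limit_distribution y]
    by (simp add: limit_distribution_invariant_P[OF y])
  moreover have "((\<lambda>k. poisson_weight (\<Lambda> * t) k * limit_distribution y) has_sum limit_distribution y) UNIV"
    using has_sum_cmult_left[OF poisson_weight_has_sum, of "\<Lambda> * t" "limit_distribution y"] \<Lambda>_pos t
    by simp
  ultimately show "law N \<alpha> \<beta> \<mu> t limit_distribution y = limit_distribution y"
    by (rule has_sum_unique)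
qed

lemma exponential_ergodicity:
  "\<exists>C1>0. \<exists>C2>0. \<forall>t\<ge>0. \<forall>p. is_distr N p \<longrightarrow>
      ((\<lambda>y. \<bar>law N \<alpha> \<beta> \<mu> t p y - limit_distribution y\<bar>) summable_on Gamma N) \<and>
      (\<Sum>\<^sub>\<infinity>y\<in>Gamma N. \<bar>law N \<alpha> \<beta> \<mu> t p y - limit_distribution y\<bar>) \<le> C1 * exp (- C2 * t)"
proof (intro exI conjI allI impI)
  show "0 < 2 / (1 - doeblin_const ^ N / 2)" and "0 < \<Lambda> * (1 - mixing_base)"
    using \<epsilon>_le_1 \<Lambda>_pos mixing_base_bounds by auto
  fix t :: real and p
  assume t: "0 \<le> t" and "is_distr N p"
  then have p: "distribution_on (Gamma N) p"
    by (simp add: is_distr_iff_distribution_on)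
  note law = law_poisson_mixture[OF t p]
  show "(\<lambda>y. \<bar>law N \<alpha> \<beta> \<mu> t p y - limit_distribution y\<bar>) summable_on Gamma N"
    using \<Lambda>_pos by (intro poisson_mixture_convergence(1)[OF _ t p law]) auto
  show "(\<Sum>\<^sub>\<infinity>y\<in>Gamma N. \<bar>law N \<alpha> \<beta> \<mu> t p y - limit_distribution y\<bar>)
      \<le> 2 / (1 - doeblin_const ^ N / 2) * exp (- (\<Lambda> * (1 - mixing_base)) * t)"
    using \<Lambda>_pos by (intro poisson_mixture_convergence(2)[OF _ t p law]) auto
qed

lemma stationary_unique:
  assumes \<sigma>: "stationary N \<alpha> \<beta> \<mu> \<sigma>" and y: "y \<in> Gamma N"
  shows "\<sigma> y = limit_distribution y"
proof -
  obtain C1 C2 where C2: "0 < C2" and conv: "\<And>t p. 0 \<le> t \<Longrightarrow> is_distr N p \<Longrightarrow>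
      ((\<lambda>y. \<bar>law N \<alpha> \<beta> \<mu> t p y - limit_distribution y\<bar>) summable_on Gamma N) \<and>
      (\<Sum>\<^sub>\<infinity>y\<in>Gamma N. \<bar>law N \<alpha> \<beta> \<mu> t p y - limit_distribution y\<bar>) \<le> C1 * exp (- C2 * t)"
    using exponential_ergodicity by blast
  have "\<sigma> y - limit_distribution y = 0"
  proof (rule eq_0_if_abs_le_null_sequence)
    fix n :: nat
    have distr: "is_distr N \<sigma>" and law: "law N \<alpha> \<beta> \<mu> (real n) \<sigma> y = \<sigma> y"
      using \<sigma> y by (auto simp: stationary_def)
    have "(\<lambda>y. law N \<alpha> \<beta> \<mu> (real n) \<sigma> y - limit_distribution y) summable_on Gamma N"
      using conv[OF _ distr, of "real n"] by (simp add: abs_summable_on_real_iff)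
    from order.trans[OF abs_le_infsum_abs[OF this y] conv[OF _ distr, THEN conjunct2]]
    show "\<bar>\<sigma> y - limit_distribution y\<bar> \<le> C1 * exp (- C2) ^ n"
      using law by (simp add: exp_of_nat_mult[symmetric] mult.commute)
  next
    show "(\<lambda>n. C1 * exp (- C2) ^ n) \<longlonglongrightarrow> 0"
      using tendsto_mult[OF tendsto_const LIMSEQ_power_zero, of "exp (- C2)" C1] C2 by simp
  qed
  then show ?thesis by simp
qed

end

theorem theorem2:
  fixes N :: nat and \<alpha> \<beta> \<mu> :: real
  assumes "\<alpha> > 0" and "\<beta> > 0" and "\<mu> > 0" and "N \<ge> 2"
  shows "\<exists>\<pi>. stationary N \<alpha> \<beta> \<mu> \<pi>
          \<and> (\<forall>\<sigma>. stationary N \<alpha> \<beta> \<mu> \<sigma> \<longrightarrow> (\<forall>y\<in>Gamma N. \<sigma> y = \<pi> y))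
          \<and> (\<exists>C1>0. \<exists>C2>0. \<forall>t\<ge>0. \<forall>p. is_distr N p \<longrightarrow>
                ((\<lambda>y. \<bar>law N \<alpha> \<beta> \<mu> t p y - \<pi> y\<bar>) summable_on Gamma N)
              \<and> (\<Sum>\<^sub>\<infinity>y\<in>Gamma N. \<bar>law N \<alpha> \<beta> \<mu> t p y - \<pi> y\<bar>) \<le> C1 * exp (- C2 * t))"
proof -
  interpret particle_system N \<alpha> \<beta> \<mu>
    using assms by unfold_locales
  have "\<forall>\<sigma>. stationary N \<alpha> \<beta> \<mu> \<sigma> \<longrightarrow> (\<forall>y\<in>Gamma N. \<sigma> y = limit_distribution y)"
    using stationary_unique by blast
  then show ?thesis
    using limit_distribution_stationary exponential_ergodicity by blast
qed

end
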